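(* Let $\Lambda_i\in\mathcal H_I$, $i\in[n]$, and let $\mathbb P$ be atomless. (i) If each $\phi_i:[0,\infty)\to\mathbb R$ is strictly convex with $\phi_i(1)=0$, $\lim_{x\to\infty}\phi_i(x)/x=\infty$, $\delta_i>0$, and $\Lambda_1^*$ is attainable, then $\mathop{\square}_{i=1}^n\sup_{\mathbb Q\in\mathcal P_{\phi_i}(\mathbb P,\delta_i)}\Lambda_i\mathrm{VaR}^{\mathbb Q}(X)=\Lambda_1^*\mathrm{VaR}^{\mathbb P}(X)$ for all $X\in\mathcal X$. (ii) If $0\le k_{i,1}<1<k_{i,2}$ and $\Lambda_2^*$ is attainable, then $\mathop{\square}_{i=1}^n\sup_{\mathbb Q\in\mathcal P(\mathbb P,k_{i,1},k_{i,2})}\Lambda_i\mathrm{VaR}^{\mathbb Q}(X)=\Lambda_2^*\mathrm{VaR}^{\mathbb P}(X)$ for all $X\in\mathcal X$.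
   Context: Notation as follows. $\Lambda\mathrm{VaR}^w(X)=\inf\{x:w(X>x)\le\Lambda(x)\}$; $\mathcal H_I$: increasing functions $\mathbb R\to(0,1)$. $\mathcal P_\phi(\mathbb P,\delta)=\{\mathbb Q\ll\mathbb P:\mathbb E^{\mathbb P}[\phi(\mathrm d\mathbb Q/\mathrm d\mathbb P)]\le\delta\}$; $g_{\phi,\delta}(x)=\sup\{t\in[x,1]:x\phi(t/x)+(1-x)\phi((1-t)/(1-x))\le\delta\}$ for $x\in(0,1)$, $g_{\phi,\delta}(0)=0,g_{\phi,\delta}(1)=1$, with inverse $g^{-1}_{\phi,\delta}$ on $(0,1)$. $\mathcal P(\mathbb P,k_1,k_2)=\{\mathbb Q\ll\mathbb P:k_1\le\mathrm d\mathbb Q/\mathrm d\mathbb P\le k_2\}$; $g_i(x)=(k_{i,2}x)\wedge(k_{i,1}x+1-k_{i,1})$ with inverse $g_i^{-1}$ on $(0,1)$. $\Lambda_1^*(x)=1\wedge\sup_{y_1+\dots+y_n=x}\sum_ig^{-1}_{\phi_i,\delta_i}(\Lambda_i(y_i))$ and $\Lambda_2^*(x)=1\wedge\sup_{y_1+\dots+y_n=x}\sum_ig_i^{-1}(\Lambda_i(y_i))$. A function of the form $\Lambda^*(x)=1\wedge\sup_{\sum y_i=x}\sum_i\tilde\Lambda_i(y_i)$ is attainable if for each $x$ there exist $(y_i)$ with $\sum_iy_i=x$ and $1\wedge\sum_i\tilde\Lambda_i(y_i)=\Lambda^*(x)$. Inf-convolution $\mathop{\square}_i\rho_i(X)=\inf\{\sum_i\rho_i(X_i):X_i\in\mathcal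 X,\sum_iX_i=X\}$, with $\mathcal X$ a set of real-valued random variables containing constants and closed under sums, differences, multiplication by indicators. *)

theory Defs
  imports "HOL-Probability.Probability"
begin

definition atomless :: "'a measure \<Rightarrow> bool" where
  "atomless M \<longleftrightarrow> (\<forall>A\<in>sets M. measure M A > 0 \<longrightarrow>
      (\<exists>B\<in>sets M. B \<subseteq> A \<and> 0 < measure M B \<and> measure M B < measure M A))"

definition H_I :: "(real \<Rightarrow> real) set" where
  "H_I = {L. mono L \<and> (\<forall>x. 0 < L x \<and> L x < 1)}"

text \<open>Lambda-VaR under the probability measure w:
  inf of x with w(X > x) <= Lambda(x), as an extended real (inf of empty set is +infinity).\<close>
definition LVaR :: "(real \<Rightarrow> real) \<Rightarrow> 'a measure \<Rightarrow> ('a \<Rightarrow> real) \<Rightarrow> ereal" where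
  "LVaR L w X = Inf (ereal ` {x. measure w {\<omega> \<in> space w. X \<omega> > x} \<le> L x})"

definition strictly_convex_nonneg :: "(real \<Rightarrow> real) \<Rightarrow> bool" where
  "strictly_convex_nonneg f \<longleftrightarrow> (\<forall>x\<ge>0. \<forall>y\<ge>0. \<forall>t. x \<noteq> y \<and> 0 < t \<and> t < 1 \<longrightarrow>
      f (t * x + (1 - t) * y) < t * f x + (1 - t) * f y)"

definition abs_cont_probs :: "'a measure \<Rightarrow> 'a measure set" where
  "abs_cont_probs P = {Q. prob_space Q \<and> sets Q = sets P \<and> absolutely_continuous P Q}"

definition phi_ball :: "'a measure \<Rightarrow> (real \<Rightarrow> real) \<Rightarrow> real \<Rightarrow> 'a measure set" where
  "phi_ball P \<phi> \<delta> = {Q \<in> abs_cont_probs P.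
      integrable P (\<lambda>\<omega>. \<phi> (enn2real (RN_deriv P Q \<omega>))) \<and>
      (\<integral>\<omega>. \<phi> (enn2real (RN_deriv P Q \<omega>)) \<partial>P) \<le> \<delta>}"

definition ratio_band :: "'a measure \<Rightarrow> real \<Rightarrow> real \<Rightarrow> 'a measure set" where
  "ratio_band P k1 k2 = {Q \<in> abs_cont_probs P.
      (AE \<omega> in P. ennreal k1 \<le> RN_deriv P Q \<omega> \<and> RN_deriv P Q \<omega> \<le> ennreal k2)}"

definition g_phi :: "(real \<Rightarrow> real) \<Rightarrow> real \<Rightarrow> real \<Rightarrow> real" where
  "g_phi \<phi> \<delta> x = (if x = 0 then 0 else if x = 1 then 1 else
      Sup {t. x \<le> t \<and> t \<le> 1 \<and> x * \<phi> (t / x) + (1 - x) * \<phi> ((1 - t) / (1 - x)) \<le> \<delta>})"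

definition g_band :: "real \<Rightarrow> real \<Rightarrow> real \<Rightarrow> real" where
  "g_band k1 k2 x = min (k2 * x) (k1 * x + 1 - k1)"

definition inv01 :: "(real \<Rightarrow> real) \<Rightarrow> real \<Rightarrow> real" where
  "inv01 g y = (THE x. 0 < x \<and> x < 1 \<and> g x = y)"

definition Lstar :: "nat \<Rightarrow> (nat \<Rightarrow> real \<Rightarrow> real) \<Rightarrow> real \<Rightarrow> real" where
  "Lstar n Lt x = min 1 (Sup {(\<Sum>i=1..n. Lt i (y i)) | y. (\<Sum>i=1..n. y i) = x})"

definition attainable :: "nat \<Rightarrow> (nat \<Rightarrow> real \<Rightarrow> real) \<Rightarrow> bool" where
  "attainable n Lt \<longleftrightarrow> (\<forall>x. \<exists>y. (\<Sum>i=1..n. y i) = x \<and>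
      min 1 (\<Sum>i=1..n. Lt i (y i)) = Lstar n Lt x)"

definition infconv :: "nat \<Rightarrow> (nat \<Rightarrow> ('a \<Rightarrow> real) \<Rightarrow> ereal) \<Rightarrow> 'a measure \<Rightarrow> ('a \<Rightarrow> real) set
    \<Rightarrow> ('a \<Rightarrow> real) \<Rightarrow> ereal" where
  "infconv n \<rho> M XX X = Inf {(\<Sum>i=1..n. \<rho> i (Y i)) | Y.
      (\<forall>i\<in>{1..n}. Y i \<in> XX) \<and> (\<forall>\<omega>\<in>space M. (\<Sum>i=1..n. Y i \<omega>) = X \<omega>)}"

definition admissible_rvs :: "'a measure \<Rightarrow> ('a \<Rightarrow> real) set \<Rightarrow> bool" where
  "admissible_rvs M XX \<longleftrightarrow> XX \<subseteq> borel_measurable M \<and>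
     (\<forall>c. (\<lambda>_. c) \<in> XX) \<and>
     (\<forall>X\<in>XX. \<forall>Y\<in>XX. (\<lambda>\<omega>. X \<omega> + Y \<omega>) \<in> XX \<and> (\<lambda>\<omega>. X \<omega> - Y \<omega>) \<in> XX) \<and>
     (\<forall>X\<in>XX. \<forall>A\<in>sets M. (\<lambda>\<omega>. indicator A \<omega> * X \<omega>) \<in> XX)"

end

theory Submission
  imports Defs
begin

(* For one agent, the worst case of the Lambda-VaR over an ambiguity set depends on X only through
   the upper probability sup_Q Q(X > x). For the phi-divergence ball and for the density band this
   upper probability is g(P(X > x)) for an increasing distortion g of [0,1]: Jensen's inequality on
   an event and its complement bounds Q(A) by g(P(A)), and densities that are constant on A and on
   its complement attain the bound. Hence the robust risk measure is the ordinary Lambda'-VaR under P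
   with Lambda' = g^-1 o Lambda. For Lambda_i-VaRs under an atomless P the inf-convolution is the
   Lambda*-VaR: a union bound over the events {Y_i > x_i} gives the lower bound, and for the upper
   bound the tail event {X > s} is split, by atomlessness, into pieces of probabilities at most
   Lambda_i(y_i), where (y_i) attains Lambda*(s). *)

section \<open>Atomless probability spaces\<close>

lemma atomless_exists_small_subset:
  assumes "prob_space M" "atomless M" "A \<in> sets M" "measure M A > 0" "e > 0"
  shows "\<exists>B\<in>sets M. B \<subseteq> A \<and> 0 < measure M B \<and> measure M B \<le> e"
proof -
  interpret prob_space M by fact
  have halving: "\<exists>B\<in>sets M. B \<subseteq> A \<and> 0 < measure M B \<and> measure M B \<le> measure M A / 2 ^ k" for k
  proof (induction k)
    case 0
    then show ?case using assms by auto
  next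
    case (Suc k)
    then obtain B where B: "B \<in> sets M" "B \<subseteq> A" "0 < measure M B" "measure M B \<le> measure M A / 2 ^ k"
      by blast
    with \<open>atomless M\<close> obtain C where C: "C \<in> sets M" "C \<subseteq> B" "0 < measure M C" "measure M C < measure M B"
      unfolding atomless_def by blast
    have "measure M (B - C) = measure M B - measure M C"
      using B C by (simp add: finite_measure_Diff)
    have half: "measure M B / 2 \<le> measure M A / 2 ^ Suc k"
      using divide_right_mono[OF B(4), of 2] by simp
    show ?case
    proof (cases "measure M C \<le> measure M B / 2")
      case True
      then show ?thesis using B C half by (intro bexI[of _ C]) auto
    next
      case False
      then show ?thesis
        using B C half \<open>measure M (B - C) = _\<close> by (intro bexI[of _ "B - C"]) auto
    qed
  qed
  obtain k where "(1/2::real) ^ k < e / measure M A"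
    using real_arch_pow_inv[of "e / measure M A" "1/2"] assms by auto
  then have "measure M A / 2 ^ k < e"
    using assms by (simp add: pos_less_divide_eq power_one_over mult.commute)
  with halving[of k] show ?thesis
    by (meson less_imp_le order.trans)
qed

lemma (in finite_measure) greedy_exhaustion:
  assumes "A \<in> sets M" "0 \<le> c"
  obtains D where "incseq D" "\<And>k. D k \<in> sets M" "\<And>k. D k \<subseteq> A" "\<And>k. measure M (D k) \<le> c"
    "\<And>k E. E \<in> sets M \<Longrightarrow> E \<subseteq> A - D k \<Longrightarrow> measure M (D k) + measure M E \<le> c
       \<Longrightarrow> measure M E \<le> 2 * (measure M (D (Suc k)) - measure M (D k))"
proof -
  define adm where "adm D C \<longleftrightarrow> C \<in> sets M \<and> C \<subseteq> A - D \<and> measure M D + measure M C \<le> c" for D C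
  define s where "s D = Sup {measure M C | C. adm D C}" for D
  have bdd: "bdd_above {measure M C | C. adm D C}" if "D \<in> sets M" for D
    using that by (intro bdd_aboveI[of _ c])
      (auto simp: adm_def intro: order_trans[OF add_increasing[OF measure_nonneg order_refl]])
  \<comment> \<open>each step adds a set carrying at least half of what could still be added\<close>
  have step: "\<exists>C. adm D C \<and> s D \<le> 2 * measure M C"
    if D: "D \<in> sets M" "D \<subseteq> A" "measure M D \<le> c" for D
  proof (cases "s D \<le> 0")
    case True
    then show ?thesis using D by (intro exI[of _ "{}"]) (auto simp: adm_def)
  next
    case False
    have "adm D {}" using D by (simp add: adm_def)
    moreover have "s D / 2 < Sup {measure M C | C. adm D C}" using False by (simp add: s_def)
    ultimately obtain x where "x \<in> {measure M C | C. adm D C}" "s D / 2 < x"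
      using less_cSup_iff[OF _ bdd[OF D(1)]] by blast
    then show ?thesis by auto
  qed
  define ch where "ch D = (SOME C. adm D C \<and> s D \<le> 2 * measure M C)" for D
  have ch: "adm D (ch D)" "s D \<le> 2 * measure M (ch D)"
    if "D \<in> sets M" "D \<subseteq> A" "measure M D \<le> c" for D
    using someI_ex[OF step[OF that]] unfolding ch_def by blast+
  define D where "D k = ((\<lambda>D. D \<union> ch D) ^^ k) {}" for k
  have D_Suc: "D (Suc k) = D k \<union> ch (D k)" for k by (simp add: D_def)
  have grow: "measure M (D (Suc k)) = measure M (D k) + measure M (ch (D k))"
    if "D k \<in> sets M" "D k \<subseteq> A" "measure M (D k) \<le> c" for k
    unfolding D_Suc using ch[OF that] that by (intro finite_measure_Union) (auto simp: adm_def)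
  have inv: "D k \<in> sets M \<and> D k \<subseteq> A \<and> measure M (D k) \<le> c" for k
  proof (induction k)
    case 0
    then show ?case using assms by (simp add: D_def)
  next
    case (Suc k)
    then show ?case using ch[of "D k"] grow[of k] by (auto simp: D_Suc adm_def)
  qed
  show ?thesis
  proof (rule that)
    show "incseq D" by (rule incseq_SucI) (simp add: D_Suc)
    show "D k \<in> sets M" "D k \<subseteq> A" "measure M (D k) \<le> c" for k using inv by auto
    fix k E assume E: "E \<in> sets M" "E \<subseteq> A - D k" "measure M (D k) + measure M E \<le> c"
    have "measure M E \<le> s (D k)"
      unfolding s_def using E inv[of k] by (intro cSup_upper bdd) (auto simp: adm_def)
    then show "measure M E \<le> 2 * (measure M (D (Suc k)) - measure M (D k))"
      using ch(2)[of "D k"] grow[of k] inv[of k] by simp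
  qed
qed

lemma atomless_exists_subset_measure:
  assumes "prob_space M" "atomless M" "A \<in> sets M" "0 \<le> c" "c \<le> measure M A"
  shows "\<exists>B\<in>sets M. B \<subseteq> A \<and> measure M B = c"
proof -
  interpret prob_space M by fact
  obtain D where D: "incseq D" "\<And>k. D k \<in> sets M" "\<And>k. D k \<subseteq> A" "\<And>k. measure M (D k) \<le> c"
    and gain: "\<And>k E. E \<in> sets M \<Longrightarrow> E \<subseteq> A - D k \<Longrightarrow> measure M (D k) + measure M E \<le> c
       \<Longrightarrow> measure M E \<le> 2 * (measure M (D (Suc k)) - measure M (D k))"
    using greedy_exhaustion[OF assms(3,4)] by metis
  define B where "B = (\<Union>k. D k)"
  have B: "B \<in> sets M" "B \<subseteq> A" using D by (auto simp: B_def)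
  have lim: "(\<lambda>k. measure M (D k)) \<longlonglongrightarrow> measure M B"
    unfolding B_def using D by (intro finite_Lim_measure_incseq) auto
  have DB: "measure M (D k) \<le> measure M B" for k
    using D B by (intro finite_measure_mono) (auto simp: B_def)
  have "measure M B = c"
  proof (rule ccontr)
    assume "measure M B \<noteq> c"
    then have "measure M B < c" using LIMSEQ_le_const2[OF lim] D(4) by force
    moreover have "measure M (A - B) = measure M A - measure M B"
      using B assms(3) by (simp add: finite_measure_Diff)
    ultimately obtain E where E: "E \<in> sets M" "E \<subseteq> A - B" "0 < measure M E" "measure M E \<le> c - measure M B"
      using atomless_exists_small_subset[OF assms(1,2), of "A - B" "c - measure M B"] assms B by auto
    have gain_lim: "(\<lambda>k. 2 * (measure M (D (Suc k)) - measure M (D k))) \<longlonglongrightarrow> 2 * (measure M B - measure M B)"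
      by (intro tendsto_mult tendsto_const tendsto_diff LIMSEQ_Suc[OF lim] lim)
    have "measure M E \<le> 2 * (measure M (D (Suc k)) - measure M (D k))" for k
      using E DB[of k] by (intro gain) (auto simp: B_def)
    then have "measure M E \<le> 2 * (measure M B - measure M B)"
      by (intro LIMSEQ_le_const[OF gain_lim]) auto
    with E show False by simp
  qed
  with B show ?thesis by blast
qed

lemma atomless_partition:
  fixes a :: "nat \<Rightarrow> real"
  assumes "prob_space M" "atomless M" "n \<ge> 1" "\<forall>i\<in>{1..n}. 0 \<le> a i"
  shows "A \<in> sets M \<Longrightarrow> measure M A \<le> (\<Sum>i=1..n. a i) \<Longrightarrow>
    \<exists>B. (\<forall>i\<in>{1..n}. B i \<in> sets M \<and> B i \<subseteq> A \<and> measure M (B i) \<le> a i)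
      \<and> disjoint_family_on B {1..n} \<and> (\<Union>i\<in>{1..n}. B i) = A"
  using assms(3,4)
proof (induction n arbitrary: A rule: nat_induct_at_least)
  case base
  then show ?case by (intro exI[of _ "\<lambda>_. A"]) (auto simp: disjoint_family_on_def)
next
  case (Suc n)
  interpret prob_space M by fact
  obtain C where C: "C \<in> sets M" "C \<subseteq> A" "measure M C = min (a (Suc n)) (measure M A)"
    using atomless_exists_subset_measure[OF assms(1,2) Suc.prems(1), of "min (a (Suc n)) (measure M A)"]
      Suc.prems by auto
  have "measure M (A - C) = measure M A - measure M C"
    using C Suc.prems(1) by (simp add: finite_measure_Diff)
  moreover have "0 \<le> (\<Sum>i=1..n. a i)" using Suc.prems(3) by (intro sum_nonneg) auto
  ultimately have "measure M (A - C) \<le> (\<Sum>i=1..n. a i)"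
    using C Suc.prems(2) by (auto simp: min_def)
  then obtain B where B: "\<forall>i\<in>{1..n}. B i \<in> sets M \<and> B i \<subseteq> A - C \<and> measure M (B i) \<le> a i"
    "disjoint_family_on B {1..n}" "(\<Union>i\<in>{1..n}. B i) = A - C"
    using Suc.IH[of "A - C"] Suc.prems C by auto
  define B' where "B' = B(Suc n := C)"
  have ins: "{1..Suc n} = insert (Suc n) {1..n}" and new: "Suc n \<notin> {1..n}" by auto
  have old: "B' i = B i" if "i \<in> {1..n}" for i using that by (simp add: B'_def)
  then have U: "(\<Union>i\<in>{1..n}. B' i) = A - C" using B(3) by simp
  have "B' (Suc n) = C" by (simp add: B'_def)
  then have "(\<Union>i\<in>{1..Suc n}. B' i) = A" and "B' (Suc n) \<inter> (\<Union>i\<in>{1..n}. B' i) = {}"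
    unfolding ins UN_insert U using C by auto
  moreover have "disjoint_family_on B' {1..n}"
    using B(2) by (rule disjoint_family_on_bisimulation) (simp add: old)
  ultimately have "disjoint_family_on B' {1..Suc n}" "(\<Union>i\<in>{1..Suc n}. B' i) = A"
    unfolding ins disjoint_family_on_insert[OF new] by blast+
  moreover have "\<forall>i\<in>{1..Suc n}. B' i \<in> sets M \<and> B' i \<subseteq> A \<and> measure M (B' i) \<le> a i"
    unfolding ins using B(1) C old by (auto simp: B'_def)
  ultimately show ?case by blast
qed

section \<open>Lambda-VaR and upper probabilities\<close>

abbreviation exceed_prob :: "'a measure \<Rightarrow> ('a \<Rightarrow> real) \<Rightarrow> real \<Rightarrow> real" where
  "exceed_prob w Y x \<equiv> measure w {\<omega> \<in> space w. Y \<omega> > x}"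

lemma LVaR_le_ereal:
  assumes "\<And>x. b < x \<Longrightarrow> exceed_prob w Y x \<le> L x"
  shows "LVaR L w Y \<le> ereal b"
proof (rule dense_ge)
  fix y assume "ereal b < y"
  then obtain x where "ereal b < ereal x" "ereal x < y"
    using ereal_dense2 by blast
  then have x: "b < x" "ereal x < y" by simp_all
  then have "LVaR L w Y \<le> ereal x"
    unfolding LVaR_def using assms by (intro Inf_lower) auto
  with x show "LVaR L w Y \<le> y" by simp
qed

lemma exceed_prob_antimono:
  assumes "finite_measure w" "Y \<in> borel_measurable w" "x \<le> x'"
  shows "exceed_prob w Y x' \<le> exceed_prob w Y x"
  using assms by (intro finite_measure.finite_measure_mono) auto

lemma LVaR_le_ereal_iff:
  assumes "finite_measure w" "Y \<in> borel_measurable w" "mono L"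
  shows "LVaR L w Y \<le> ereal b \<longleftrightarrow> (\<forall>x>b. exceed_prob w Y x \<le> L x)"
proof
  assume "LVaR L w Y \<le> ereal b"
  show "\<forall>x>b. exceed_prob w Y x \<le> L x"
  proof (intro allI impI)
    fix x assume "b < x"
    with \<open>LVaR L w Y \<le> ereal b\<close> have "LVaR L w Y < ereal x"
      using le_less_trans[of _ "ereal b" "ereal x"] by simp
    then obtain s where "exceed_prob w Y s \<le> L s" "s < x"
      unfolding LVaR_def Inf_less_iff by auto
    then show "exceed_prob w Y x \<le> L x"
      using exceed_prob_antimono[OF assms(1,2), of s x] monoD[OF assms(3), of s x] by simp
  qed
qed (intro LVaR_le_ereal; simp)

lemma exceed_prob_tendsto:
  assumes "prob_space M" "Y \<in> borel_measurable M"
  shows "(exceed_prob M Y \<longlongrightarrow> 0) at_top" and "(exceed_prob M Y \<longlongrightarrow> 1) at_bot"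
proof -
  interpret prob_space M by fact
  interpret D: real_distribution "distr M borel Y"
    using assms(2) by simp
  have "exceed_prob M Y x = 1 - cdf (distr M borel Y) x" for x
  proof -
    have "{\<omega> \<in> space M. Y \<omega> > x} = space M - {\<omega> \<in> space M. Y \<omega> \<le> x}" by auto
    moreover have "{\<omega> \<in> space M. Y \<omega> \<le> x} \<in> events" using assms(2) by measurable
    ultimately show ?thesis
      using assms(2) by (simp add: prob_compl cdf_def measure_distr vimage_def Int_def conj_commute)
  qed
  then have tail: "exceed_prob M Y = (\<lambda>x. 1 - cdf (distr M borel Y) x)" by (rule ext)
  show "(exceed_prob M Y \<longlongrightarrow> 0) at_top"
    unfolding tail using tendsto_diff[OF tendsto_const D.cdf_lim_at_top_prob, of 1] by simp
  show "(exceed_prob M Y \<longlongrightarrow> 1) at_bot"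
    unfolding tail using tendsto_diff[OF tendsto_const D.cdf_lim_at_bot, of 1] by simp
qed

lemma LVaR_finite:
  assumes "prob_space M" "Y \<in> borel_measurable M" "L \<in> H_I"
  shows "\<exists>r. LVaR L M Y = ereal r"
proof -
  interpret prob_space M by fact
  have L: "mono L" "\<And>x. 0 < L x \<and> L x < 1" using assms(3) by (auto simp: H_I_def)
  have "\<forall>\<^sub>F x in at_top. exceed_prob M Y x < L 0 \<and> 0 \<le> x"
    using order_tendstoD(2)[OF exceed_prob_tendsto(1)[OF assms(1,2)], of "L 0"] L(2)
    by (auto intro: eventually_conj eventually_ge_at_top)
  then obtain u where u: "exceed_prob M Y u < L 0" "0 \<le> u"
    by (auto simp: eventually_at_top_linorder)
  have "LVaR L M Y \<le> ereal u"
  proof (rule LVaR_le_ereal)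
    fix x assume "u < x"
    then show "exceed_prob M Y x \<le> L x"
      using u exceed_prob_antimono[OF _ assms(2), of u x] monoD[OF L(1), of 0 x] by simp
  qed
  have "\<forall>\<^sub>F x in at_bot. L 0 < exceed_prob M Y x \<and> x \<le> 0"
    using order_tendstoD(1)[OF exceed_prob_tendsto(2)[OF assms(1,2)], of "L 0"] L(2)
    by (auto intro: eventually_conj eventually_le_at_bot)
  then obtain l where l: "\<And>x. x \<le> l \<Longrightarrow> L 0 < exceed_prob M Y x \<and> x \<le> 0"
    by (auto simp: eventually_at_bot_linorder)
  have "ereal l \<le> LVaR L M Y"
    unfolding LVaR_def
  proof (rule Inf_greatest, clarify)
    fix x assume "exceed_prob M Y x \<le> L x"
    then show "ereal l \<le> ereal x"
      using l[of x] monoD[OF L(1), of x 0] by (cases "x \<le> l") auto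
  qed
  with \<open>LVaR L M Y \<le> ereal u\<close> show ?thesis
    by (cases "LVaR L M Y") auto
qed

(* g (P A) is the supremum of Q A over Q \<in> Qs, stated as a least upper bound so that no
   boundedness or nonemptiness of Qs is needed *)
definition upper_prob_distortion :: "'a measure \<Rightarrow> 'a measure set \<Rightarrow> (real \<Rightarrow> real) \<Rightarrow> bool" where
  "upper_prob_distortion M Qs g \<longleftrightarrow> (\<forall>Q\<in>Qs. prob_space Q \<and> sets Q = sets M) \<and>
     (\<forall>A\<in>sets M. \<forall>c. (\<forall>Q\<in>Qs. measure Q A \<le> c) \<longleftrightarrow> g (measure M A) \<le> c)"

lemma upper_prob_distortionI:
  assumes "\<And>Q. Q \<in> Qs \<Longrightarrow> prob_space Q \<and> sets Q = sets M"
    and "\<And>Q A. Q \<in> Qs \<Longrightarrow> A \<in> sets M \<Longrightarrow> measure Q A \<le> g (measure M A)"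
    and "\<And>A c. A \<in> sets M \<Longrightarrow> c < g (measure M A) \<Longrightarrow> \<exists>Q\<in>Qs. c < measure Q A"
  shows "upper_prob_distortion M Qs g"
  unfolding upper_prob_distortion_def
  using assms by (meson not_le order_trans)

lemma upper_prob_distortionD:
  assumes "upper_prob_distortion M Qs g"
  shows "\<And>Q. Q \<in> Qs \<Longrightarrow> prob_space Q \<and> sets Q = sets M"
    and "\<And>A c. A \<in> sets M \<Longrightarrow> (\<forall>Q\<in>Qs. measure Q A \<le> c) \<longleftrightarrow> g (measure M A) \<le> c"
proof -
  note distortion = assms[unfolded upper_prob_distortion_def]
  show "\<And>Q. Q \<in> Qs \<Longrightarrow> prob_space Q \<and> sets Q = sets M"
    using conjunct1[OF distortion] by blast
  show "\<And>A c. A \<in> sets M \<Longrightarrow> (\<forall>Q\<in>Qs. measure Q A \<le> c) \<longleftrightarrow> g (measure M A) \<le> c"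
    using conjunct2[OF distortion] by simp
qed

lemma SUP_LVaR_eq_LVaR:
  assumes "prob_space M" "Y \<in> borel_measurable M" "upper_prob_distortion M Qs g"
    and "mono L" "mono L'"
    and galois: "\<And>x p. 0 \<le> p \<Longrightarrow> p \<le> 1 \<Longrightarrow> g p \<le> L x \<longleftrightarrow> p \<le> L' x"
  shows "(SUP Q\<in>Qs. LVaR L Q Y) = LVaR L' M Y"
proof -
  interpret prob_space M by fact
  have tail: "{\<omega> \<in> space M. Y \<omega> > x} \<in> sets M" for x
    using assms(2) by measurable
  have LVaR_Q: "LVaR L Q Y \<le> ereal b \<longleftrightarrow> (\<forall>x>b. measure Q {\<omega> \<in> space M. Y \<omega> > x} \<le> L x)"
    if "Q \<in> Qs" for Q b
  proof -
    have Q: "prob_space Q" "sets Q = sets M"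
      using upper_prob_distortionD(1)[OF assms(3) that] by simp_all
    then have "finite_measure Q" "Y \<in> borel_measurable Q"
      using assms(2) measurable_cong_sets[OF Q(2) refl, of borel] by (auto intro: prob_space.axioms(1))
    from LVaR_le_ereal_iff[OF this assms(4)] show ?thesis
      using sets_eq_imp_space_eq[OF Q(2)] by simp
  qed
  have iff: "(SUP Q\<in>Qs. LVaR L Q Y) \<le> ereal b \<longleftrightarrow> LVaR L' M Y \<le> ereal b" for b
  proof -
    have "(SUP Q\<in>Qs. LVaR L Q Y) \<le> ereal b \<longleftrightarrow> (\<forall>Q\<in>Qs. \<forall>x>b. measure Q {\<omega> \<in> space M. Y \<omega> > x} \<le> L x)"
      unfolding SUP_le_iff by (rule ball_cong[OF refl LVaR_Q])
    also have "\<dots> \<longleftrightarrow> (\<forall>x>b. \<forall>Q\<in>Qs. measure Q {\<omega> \<in> space M. Y \<omega> > x} \<le> L x)"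
      by blast
    also have "\<dots> \<longleftrightarrow> (\<forall>x>b. g (exceed_prob M Y x) \<le> L x)"
      using upper_prob_distortionD(2)[OF assms(3) tail] by simp
    also have "\<dots> \<longleftrightarrow> (\<forall>x>b. exceed_prob M Y x \<le> L' x)"
      using galois by simp
    also have "\<dots> \<longleftrightarrow> LVaR L' M Y \<le> ereal b"
      using LVaR_le_ereal_iff[OF finite_measure_axioms assms(2,5)] by simp
    finally show ?thesis .
  qed
  show ?thesis
    by (rule antisym; rule ereal_le_real; simp add: iff)
qed

section \<open>Inf-convolution of Lambda-VaRs\<close>

lemma Lstar_ge_sum:
  assumes "\<forall>i\<in>{1..n}. \<forall>x. \<Lambda> i x \<le> 1" "(\<Sum>i=1..n. y i) = x"
  shows "min 1 (\<Sum>i=1..n. \<Lambda> i (y i)) \<le> Lstar n \<Lambda> x"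
proof -
  have "bdd_above {(\<Sum>i=1..n. \<Lambda> i (y i)) | y. (\<Sum>i=1..n. y i) = x}"
  proof (rule bdd_aboveI)
    fix s assume "s \<in> {(\<Sum>i=1..n. \<Lambda> i (y i)) | y. (\<Sum>i=1..n. y i) = x}"
    then obtain y where "s = (\<Sum>i=1..n. \<Lambda> i (y i))" by blast
    also have "\<dots> \<le> (\<Sum>i=1..n. 1)" using assms(1) by (intro sum_mono) auto
    finally show "s \<le> real n" by simp
  qed
  then have "(\<Sum>i=1..n. \<Lambda> i (y i)) \<le> Sup {(\<Sum>i=1..n. \<Lambda> i (y i)) | y. (\<Sum>i=1..n. y i) = x}"
    using assms(2) by (intro cSup_upper) auto
  then show ?thesis by (simp add: Lstar_def min.coboundedI2)
qed

lemma exceed_prob_sum_le: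
  fixes Y :: "nat \<Rightarrow> 'a \<Rightarrow> real"
  assumes "prob_space M" "\<forall>i\<in>{1..n}. Y i \<in> borel_measurable M"
    and "\<forall>\<omega>\<in>space M. (\<Sum>i=1..n. Y i \<omega>) = X \<omega>" "(\<Sum>i=1..n. x i) = z"
  shows "exceed_prob M X z \<le> (\<Sum>i=1..n. exceed_prob M (Y i) (x i))"
proof -
  interpret prob_space M by fact
  have "{\<omega> \<in> space M. X \<omega> > z} \<subseteq> (\<Union>i\<in>{1..n}. {\<omega> \<in> space M. Y i \<omega> > x i})"
  proof (rule subsetI, rule ccontr)
    fix \<omega> assume "\<omega> \<in> {\<omega> \<in> space M. X \<omega> > z}" "\<omega> \<notin> (\<Union>i\<in>{1..n}. {\<omega> \<in> space M. Y i \<omega> > x i})"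
    then have "\<omega> \<in> space M" "z < X \<omega>" and le: "\<And>i. i \<in> {1..n} \<Longrightarrow> Y i \<omega> \<le> x i"
      by (auto simp: not_less)
    then have "z < (\<Sum>i=1..n. Y i \<omega>)" using assms(3) by simp
    moreover have "(\<Sum>i=1..n. Y i \<omega>) \<le> (\<Sum>i=1..n. x i)" by (rule sum_mono) (rule le)
    ultimately show False using assms(4) by simp
  qed
  moreover have "{\<omega> \<in> space M. Y i \<omega> > x i} \<in> sets M" if "i \<in> {1..n}" for i
    using assms(2)[rule_format, OF that] by measurable
  ultimately have "exceed_prob M X z \<le> measure M (\<Union>i\<in>{1..n}. {\<omega> \<in> space M. Y i \<omega> > x i})"
    by (intro finite_measure_mono sets.finite_UN) auto
  also have "\<dots> \<le> (\<Sum>i=1..n. exceed_prob M (Y i) (x i))"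
    using assms(2) by (intro finite_measure_subadditive_finite) auto
  finally show ?thesis .
qed

lemma LVaR_Lstar_le_sum:
  fixes \<Lambda> :: "nat \<Rightarrow> real \<Rightarrow> real"
  assumes "prob_space M" "n \<ge> 1" "\<forall>i\<in>{1..n}. \<Lambda> i \<in> H_I"
    and "\<forall>i\<in>{1..n}. Y i \<in> borel_measurable M" "\<forall>\<omega>\<in>space M. (\<Sum>i=1..n. Y i \<omega>) = X \<omega>"
  shows "LVaR (Lstar n \<Lambda>) M X \<le> (\<Sum>i=1..n. LVaR (\<Lambda> i) M (Y i))"
proof -
  interpret prob_space M by fact
  have "\<forall>i\<in>{1..n}. \<exists>r. LVaR (\<Lambda> i) M (Y i) = ereal r"
    using LVaR_finite[OF assms(1)] assms(3,4) by blast
  then obtain r where r: "\<And>i. i \<in> {1..n} \<Longrightarrow> LVaR (\<Lambda> i) M (Y i) = ereal (r i)"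
    by metis
  have tail_Y: "exceed_prob M (Y i) x \<le> \<Lambda> i x" if "i \<in> {1..n}" "r i < x" for i x
    using LVaR_le_ereal_iff[OF finite_measure_axioms, of "Y i" "\<Lambda> i" "r i"] r[of i] that assms(3,4)
    by (auto simp: H_I_def)
  have "LVaR (Lstar n \<Lambda>) M X \<le> ereal (\<Sum>i=1..n. r i)"
  proof (rule LVaR_le_ereal)
    fix z assume z: "(\<Sum>i=1..n. r i) < z"
    define x where "x i = r i + (z - (\<Sum>i=1..n. r i)) / n" for i
    have x_gt: "r i < x i" for i using z assms(2) by (simp add: x_def)
    have sum_x: "(\<Sum>i=1..n. x i) = z" using assms(2) by (simp add: x_def sum.distrib)
    have "exceed_prob M X z \<le> (\<Sum>i=1..n. exceed_prob M (Y i) (x i))"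
      by (rule exceed_prob_sum_le[OF assms(1,4,5) sum_x])
    also have "\<dots> \<le> (\<Sum>i=1..n. \<Lambda> i (x i))"
      using tail_Y x_gt by (intro sum_mono) auto
    finally have "exceed_prob M X z \<le> min 1 (\<Sum>i=1..n. \<Lambda> i (x i))" by simp
    also have "\<dots> \<le> Lstar n \<Lambda> z"
      using assms(3) sum_x by (intro Lstar_ge_sum) (auto simp: H_I_def less_imp_le)
    finally show "exceed_prob M X z \<le> Lstar n \<Lambda> z" .
  qed
  also have "\<dots> = (\<Sum>i=1..n. LVaR (\<Lambda> i) M (Y i))"
    using r by simp
  finally show ?thesis .
qed

lemma admissible_rvs_shift_indicator:
  assumes "admissible_rvs M XX" "X \<in> XX" "C \<in> sets M"
  shows "(\<lambda>\<omega>. a + indicator C \<omega> * (X \<omega> - s)) \<in> XX"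
proof -
  have const: "(\<lambda>_. c) \<in> XX" for c using assms(1) by (simp add: admissible_rvs_def)
  then have "(\<lambda>\<omega>. X \<omega> - s) \<in> XX" using assms(1,2) by (simp add: admissible_rvs_def)
  then have "(\<lambda>\<omega>. indicator C \<omega> * (X \<omega> - s)) \<in> XX" using assms(1,3) by (simp add: admissible_rvs_def)
  then show ?thesis using assms(1) const by (simp add: admissible_rvs_def)
qed

lemma disjoint_family_on_absorb_complement:
  fixes B :: "nat \<Rightarrow> 'a set"
  assumes "disjoint_family_on B {1..n}" "(\<Union>i\<in>{1..n}. B i) = A" "A \<subseteq> S" "n \<ge> 1"
  defines "C \<equiv> \<lambda>i. if i = 1 then B 1 \<union> (S - A) else B i"
  shows "disjoint_family_on C {1..n}" and "(\<Union>i\<in>{1..n}. C i) = S"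
proof -
  have BA: "B i \<subseteq> A" if "i \<in> {1..n}" for i using assms(2) that by blast
  show "disjoint_family_on C {1..n}"
    unfolding disjoint_family_on_def
  proof (intro ballI impI)
    fix i j assume ij: "i \<in> {1..n}" "j \<in> {1..n}" "i \<noteq> j"
    then have "B i \<inter> B j = {}" using assms(1) by (auto simp: disjoint_family_on_def)
    with ij BA[of i] BA[of j] show "C i \<inter> C j = {}" by (auto simp: C_def)
  qed
  have "B i \<subseteq> C i" "C i \<subseteq> S" if "i \<in> {1..n}" for i
    using BA[OF that] assms(3) by (auto simp: C_def)
  moreover have "S - A \<subseteq> C 1" "1 \<in> {1..n}" using assms(4) by (auto simp: C_def)
  ultimately show "(\<Union>i\<in>{1..n}. C i) = S" using assms(2) by blast
qed

lemma atomless_exists_allocation: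
  fixes a y :: "nat \<Rightarrow> real"
  assumes "prob_space M" "atomless M" "admissible_rvs M XX" "X \<in> XX" "n \<ge> 1"
    and "\<forall>i\<in>{1..n}. 0 \<le> a i" "(\<Sum>i=1..n. y i) = s" "exceed_prob M X s \<le> (\<Sum>i=1..n. a i)"
  shows "\<exists>Y. (\<forall>i\<in>{1..n}. Y i \<in> XX \<and> exceed_prob M (Y i) (y i) \<le> a i)
           \<and> (\<forall>\<omega>\<in>space M. (\<Sum>i=1..n. Y i \<omega>) = X \<omega>)"
proof -
  interpret prob_space M by fact
  define A where "A = {\<omega> \<in> space M. X \<omega> > s}"
  have "X \<in> borel_measurable M" using assms(3,4) by (auto simp: admissible_rvs_def)
  then have A: "A \<in> sets M" unfolding A_def by measurable
  obtain B where B: "\<forall>i\<in>{1..n}. B i \<in> sets M \<and> B i \<subseteq> A \<and> measure M (B i) \<le> a i"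
    "disjoint_family_on B {1..n}" "(\<Union>i\<in>{1..n}. B i) = A"
    using atomless_partition[OF assms(1,2,5,6) A] assms(8) by (auto simp: A_def)
  \<comment> \<open>component \<open>i\<close> takes the excess of \<open>X\<close> over \<open>s\<close> on \<open>B i\<close>; the first one also takes
      the event \<open>X \<le> s\<close>, where that excess is not positive\<close>
  define C where "C = (\<lambda>i. if i = 1 then B 1 \<union> (space M - A) else B i)"
  define Y where "Y i \<omega> = y i + indicator (C i) \<omega> * (X \<omega> - s)" for i \<omega>
  note C_partition = disjoint_family_on_absorb_complement[OF B(2,3) sets.sets_into_space[OF A] assms(5),
      folded C_def]
  have C: "C i \<in> sets M" if "i \<in> {1..n}" for i
    using B that A by (auto simp: C_def)
  have "(\<Sum>i=1..n. indicator (C i) \<omega>) = (1::real)" if "\<omega> \<in> space M" for \<omega>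
    using indicator_UN_disjoint[of "{1..n}" C \<omega>] C_partition that by simp
  then have "(\<Sum>i=1..n. Y i \<omega>) = X \<omega>" if "\<omega> \<in> space M" for \<omega>
    using that assms(7) by (simp add: Y_def sum.distrib flip: sum_distrib_right)
  moreover have "exceed_prob M (Y i) (y i) \<le> a i" if i: "i \<in> {1..n}" for i
  proof -
    have "{\<omega> \<in> space M. Y i \<omega> > y i} \<subseteq> B i"
    proof
      fix \<omega> assume "\<omega> \<in> {\<omega> \<in> space M. Y i \<omega> > y i}"
      then have "\<omega> \<in> space M" "indicator (C i) \<omega> * (X \<omega> - s) > 0"
        by (auto simp: Y_def)
      then have "\<omega> \<in> C i" "\<omega> \<in> A"
        by (cases "\<omega> \<in> C i"; simp add: A_def)+
      then show "\<omega> \<in> B i" by (auto simp: C_def split: if_splits)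
    qed
    then have "exceed_prob M (Y i) (y i) \<le> measure M (B i)"
      using B(1) i by (intro finite_measure_mono) auto
    also have "\<dots> \<le> a i" using B(1) i by blast
    finally show ?thesis .
  qed
  moreover have "Y i \<in> XX" if "i \<in> {1..n}" for i
    unfolding Y_def using admissible_rvs_shift_indicator[OF assms(3,4) C[OF that]] .
  ultimately show ?thesis by blast
qed

lemma infconv_le_LVaR_Lstar:
  fixes \<Lambda> :: "nat \<Rightarrow> real \<Rightarrow> real"
  assumes "prob_space M" "atomless M" "admissible_rvs M XX" "X \<in> XX" "n \<ge> 1"
    and "\<forall>i\<in>{1..n}. \<Lambda> i \<in> H_I" "attainable n \<Lambda>"
    and "\<forall>i\<in>{1..n}. \<forall>Y\<in>XX. \<rho> i Y = LVaR (\<Lambda> i) M Y"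
  shows "infconv n \<rho> M XX X \<le> LVaR (Lstar n \<Lambda>) M X"
  unfolding LVaR_def
proof (rule Inf_greatest, clarify)
  fix s assume s: "exceed_prob M X s \<le> Lstar n \<Lambda> s"
  obtain y where y: "(\<Sum>i=1..n. y i) = s" "min 1 (\<Sum>i=1..n. \<Lambda> i (y i)) = Lstar n \<Lambda> s"
    using assms(7) by (auto simp: attainable_def)
  have \<Lambda>: "mono (\<Lambda> i)" "0 \<le> \<Lambda> i x" if "i \<in> {1..n}" for i x
    using assms(6) that by (auto simp: H_I_def less_imp_le)
  then obtain Y where Y: "\<forall>i\<in>{1..n}. Y i \<in> XX \<and> exceed_prob M (Y i) (y i) \<le> \<Lambda> i (y i)"
    "\<forall>\<omega>\<in>space M. (\<Sum>i=1..n. Y i \<omega>) = X \<omega>"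
    using atomless_exists_allocation[OF assms(1-5), of "\<lambda>i. \<Lambda> i (y i)" y s] s y by force
  have "LVaR (\<Lambda> i) M (Y i) \<le> ereal (y i)" if i: "i \<in> {1..n}" for i
  proof (rule LVaR_le_ereal)
    fix x assume "y i < x"
    moreover have "Y i \<in> borel_measurable M"
      using Y(1) i assms(3) by (auto simp: admissible_rvs_def)
    ultimately show "exceed_prob M (Y i) x \<le> \<Lambda> i x"
      using exceed_prob_antimono[of M "Y i" "y i" x] Y(1) i monoD[OF \<Lambda>(1)[OF i], of "y i" x]
        prob_space.axioms(1)[OF assms(1)] by fastforce
  qed
  then have "(\<Sum>i=1..n. \<rho> i (Y i)) \<le> (\<Sum>i=1..n. ereal (y i))"
    using Y(1) assms(8) by (intro sum_mono) auto
  then have "(\<Sum>i=1..n. \<rho> i (Y i)) \<le> ereal s"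
    using y(1) by simp
  moreover have "infconv n \<rho> M XX X \<le> (\<Sum>i=1..n. \<rho> i (Y i))"
    unfolding infconv_def using Y by (intro Inf_lower) blast
  ultimately show "infconv n \<rho> M XX X \<le> ereal s" by simp
qed

theorem infconv_eq_LVaR_Lstar:
  fixes \<Lambda> :: "nat \<Rightarrow> real \<Rightarrow> real"
  assumes "prob_space M" "atomless M" "admissible_rvs M XX" "X \<in> XX" "n \<ge> 1"
    and "\<forall>i\<in>{1..n}. \<Lambda> i \<in> H_I" "attainable n \<Lambda>"
    and "\<forall>i\<in>{1..n}. \<forall>Y\<in>XX. \<rho> i Y = LVaR (\<Lambda> i) M Y"
  shows "infconv n \<rho> M XX X = LVaR (Lstar n \<Lambda>) M X"
proof (rule antisym)
  show "infconv n \<rho> M XX X \<le> LVaR (Lstar n \<Lambda>) M X"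
    by (rule infconv_le_LVaR_Lstar[OF assms])
  show "LVaR (Lstar n \<Lambda>) M X \<le> infconv n \<rho> M XX X"
    unfolding infconv_def
  proof (rule Inf_greatest, clarify)
    fix Y assume Y: "\<forall>i\<in>{1..n}. Y i \<in> XX" "\<forall>\<omega>\<in>space M. (\<Sum>i=1..n. Y i \<omega>) = X \<omega>"
    then have "\<forall>i\<in>{1..n}. Y i \<in> borel_measurable M"
      using assms(3) by (auto simp: admissible_rvs_def)
    from LVaR_Lstar_le_sum[OF assms(1,5,6) this Y(2)]
    show "LVaR (Lstar n \<Lambda>) M X \<le> (\<Sum>i=1..n. \<rho> i (Y i))"
      using Y(1) assms(8) by simp
  qed
qed

section \<open>Densities\<close>

lemma measure_eq_integral_RN_deriv:
  assumes "prob_space M" "Q \<in> abs_cont_probs M" "B \<in> sets M"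
  shows "integrable M (\<lambda>\<omega>. enn2real (RN_deriv M Q \<omega>) * indicator B \<omega>)"
    and "measure Q B = (\<integral>\<omega>. enn2real (RN_deriv M Q \<omega>) * indicator B \<omega> \<partial>M)"
proof -
  have Q: "prob_space Q" "sets Q = sets M" "absolutely_continuous M Q"
    using assms(2) by (auto simp: abs_cont_probs_def)
  interpret Q: prob_space Q by fact
  have M: "sigma_finite_measure M" "sigma_finite_measure Q"
    using assms(1) Q(1) by (simp_all add: prob_space_imp_sigma_finite)
  have B: "B \<in> sets Q" "(indicator B :: 'a \<Rightarrow> real) \<in> borel_measurable M"
    using assms(3) Q(2) by simp_all
  have "integrable Q (indicator B :: 'a \<Rightarrow> real)"
    using B(1) Q.emeasure_finite by (intro integrable_real_indicator) (auto simp: less_top[symmetric])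
  then show "integrable M (\<lambda>\<omega>. enn2real (RN_deriv M Q \<omega>) * indicator B \<omega>)"
    using sigma_finite_measure.RN_deriv_integrable[OF M Q(3,2) B(2)] by simp
  have "measure Q B = integral\<^sup>L Q (indicator B)"
    using sets.sets_into_space[OF B(1)] by (simp add: Int_absorb2)
  also have "\<dots> = (\<integral>\<omega>. enn2real (RN_deriv M Q \<omega>) * indicator B \<omega> \<partial>M)"
    using sigma_finite_measure.RN_deriv_integral[OF M Q(3,2) B(2)] .
  finally show "measure Q B = (\<integral>\<omega>. enn2real (RN_deriv M Q \<omega>) * indicator B \<omega> \<partial>M)" .
qed

lemma self_in_abs_cont_probs: "prob_space M \<Longrightarrow> M \<in> abs_cont_probs M"
  by (simp add: abs_cont_probs_def absolutely_continuous_def)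

lemma RN_deriv_self: "prob_space M \<Longrightarrow> AE \<omega> in M. RN_deriv M M \<omega> = 1"
  using sigma_finite_measure.RN_deriv_unique[OF prob_space_imp_sigma_finite, of M "\<lambda>_. 1" M]
  by (auto simp: density_1 elim: AE_mp)

definition two_point_ratio :: "'a measure \<Rightarrow> 'a set \<Rightarrow> real \<Rightarrow> 'a \<Rightarrow> real" where
  "two_point_ratio M A t \<omega> = (if \<omega> \<in> A then t / measure M A else (1 - t) / (1 - measure M A))"

definition two_point_density :: "'a measure \<Rightarrow> 'a set \<Rightarrow> real \<Rightarrow> 'a measure" where
  "two_point_density M A t = density M (\<lambda>\<omega>. ennreal (two_point_ratio M A t \<omega>))"

lemma two_point_density:
  assumes "prob_space M" "A \<in> sets M" "0 < measure M A" "measure M A < 1" "0 \<le> t" "t \<le> 1"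
  shows "two_point_density M A t \<in> abs_cont_probs M"
    and "measure (two_point_density M A t) A = t"
    and "AE \<omega> in M. RN_deriv M (two_point_density M A t) \<omega> = ennreal (two_point_ratio M A t \<omega>)"
proof -
  interpret prob_space M by fact
  define p where "p = measure M A"
  define f where "f = two_point_ratio M A t"
  define Q where "Q = two_point_density M A t"
  have f: "f \<in> borel_measurable M" "\<And>\<omega>. 0 \<le> f \<omega>"
    using assms(2-6) unfolding f_def two_point_ratio_def[abs_def] by (measurable, auto)
  have em: "emeasure Q B = ennreal (t / p) * emeasure M (A \<inter> B) + ennreal ((1 - t) / (1 - p)) * emeasure M ((space M - A) \<inter> B)"
    if B: "B \<in> sets M" for B
  proof -
    have "emeasure Q B = (\<integral>\<^sup>+ \<omega>. ennreal (f \<omega>) * indicator B \<omega> \<partial>M)"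
      unfolding Q_def two_point_density_def f_def[symmetric] using f B by (intro emeasure_density) auto
    also have "\<dots> = (\<integral>\<^sup>+ \<omega>. ennreal (t / p) * indicator (A \<inter> B) \<omega>
        + ennreal ((1 - t) / (1 - p)) * indicator ((space M - A) \<inter> B) \<omega> \<partial>M)"
      by (intro nn_integral_cong) (auto simp: f_def two_point_ratio_def p_def indicator_def)
    also have "\<dots> = ennreal (t / p) * emeasure M (A \<inter> B) + ennreal ((1 - t) / (1 - p)) * emeasure M ((space M - A) \<inter> B)"
      using assms(2) B by (simp add: nn_integral_add nn_integral_cmult_indicator)
    finally show ?thesis .
  qed
  have p: "0 < p" "p < 1" "emeasure M A = ennreal p" "emeasure M (space M - A) = ennreal (1 - p)"
    using assms(2-4) by (simp_all add: p_def emeasure_eq_measure prob_compl)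
  have "emeasure Q (space Q) = ennreal (t / p * p + (1 - t) / (1 - p) * (1 - p))"
    using em[of "space M"] p assms(5,6) sets.sets_into_space[OF assms(2)]
    by (simp add: Q_def two_point_density_def Int_absorb2 ennreal_mult'[symmetric] ennreal_plus[symmetric] del: ennreal_plus)
  also have "t / p * p + (1 - t) / (1 - p) * (1 - p) = 1" using p by simp
  finally have "prob_space Q" by (intro prob_spaceI) simp
  moreover have "absolutely_continuous M Q"
    unfolding Q_def two_point_density_def using f by (intro absolutely_continuousI_density) (auto simp: f_def)
  ultimately show "Q \<in> abs_cont_probs M"
    by (simp add: abs_cont_probs_def Q_def two_point_density_def)
  have "(space M - A) \<inter> A = {}" by auto
  then have "emeasure Q A = ennreal (t / p * p)"
    using em[OF assms(2)] p assms(5) by (simp add: ennreal_mult'[symmetric])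
  then show "measure Q A = t" using p assms(5) by (simp add: measure_def Q_def)
  show "AE \<omega> in M. RN_deriv M Q \<omega> = ennreal (two_point_ratio M A t \<omega>)"
    using sigma_finite_measure.RN_deriv_unique[OF prob_space_imp_sigma_finite[OF assms(1)], of "\<lambda>\<omega>. ennreal (f \<omega>)"] f
    unfolding Q_def two_point_density_def f_def by (auto elim: AE_mp)
qed

lemma upper_prob_distortion_interior:
  assumes "prob_space M" "M \<in> Qs" "\<And>Q. Q \<in> Qs \<Longrightarrow> prob_space Q \<and> sets Q = sets M"
    and "g 0 = 0" "g 1 = 1"
    and "\<And>Q A. Q \<in> Qs \<Longrightarrow> A \<in> sets M \<Longrightarrow> measure Q A \<le> g (measure M A)"
    and "\<And>A c. A \<in> sets M \<Longrightarrow> 0 < measure M A \<Longrightarrow> measure M A < 1 \<Longrightarrow> c < g (measure M A)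
           \<Longrightarrow> \<exists>Q\<in>Qs. c < measure Q A"
  shows "upper_prob_distortion M Qs g"
proof (rule upper_prob_distortionI)
  show "\<And>Q. Q \<in> Qs \<Longrightarrow> prob_space Q \<and> sets Q = sets M" by (rule assms(3))
  show "\<And>Q A. Q \<in> Qs \<Longrightarrow> A \<in> sets M \<Longrightarrow> measure Q A \<le> g (measure M A)" by (rule assms(6))
  fix A c assume A: "A \<in> sets M" "c < g (measure M A)"
  interpret prob_space M by fact
  consider "measure M A = 0" | "measure M A = 1" | "0 < measure M A" "measure M A < 1"
    using measure_nonneg[of M A] prob_le_1[of A] by linarith
  then show "\<exists>Q\<in>Qs. c < measure Q A"
  proof cases
    case 1
    with A assms(4) show ?thesis by (intro bexI[OF _ assms(2)]) simp
  next
    case 2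
    with A assms(5) show ?thesis by (intro bexI[OF _ assms(2)]) simp
  next
    case 3
    with A show ?thesis by (intro assms(7))
  qed
qed

lemma ratio_band_measure_bounds:
  assumes "prob_space M" "Q \<in> ratio_band M k1 k2" "0 \<le> k1" "0 \<le> k2" "B \<in> sets M"
  shows "k1 * measure M B \<le> measure Q B" and "measure Q B \<le> k2 * measure M B"
proof -
  interpret prob_space M by fact
  define Z where "Z \<omega> = enn2real (RN_deriv M Q \<omega>)" for \<omega>
  have Q: "Q \<in> abs_cont_probs M"
    and ae: "AE \<omega> in M. ennreal k1 \<le> RN_deriv M Q \<omega> \<and> RN_deriv M Q \<omega> \<le> ennreal k2"
    using assms(2) by (auto simp: ratio_band_def)
  have "AE \<omega> in M. k1 \<le> Z \<omega> \<and> Z \<omega> \<le> k2"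
    using ae
  proof eventually_elim
    case (elim \<omega>)
    then have "RN_deriv M Q \<omega> < top" using le_less_trans[OF _ ennreal_less_top] by blast
    with elim have "enn2real (ennreal k1) \<le> Z \<omega>" "Z \<omega> \<le> enn2real (ennreal k2)"
      unfolding Z_def by (auto intro: enn2real_mono)
    with assms(3,4) show ?case by simp
  qed
  then have ae_B: "AE \<omega> in M. k1 * indicator B \<omega> \<le> Z \<omega> * indicator B \<omega> \<and> Z \<omega> * indicator B \<omega> \<le> k2 * indicator B \<omega>"
    by eventually_elim (simp add: indicator_def)
  note RN = measure_eq_integral_RN_deriv[OF assms(1) Q assms(5), folded Z_def]
  have int_B: "integrable M (\<lambda>\<omega>. k * indicator B \<omega>)" "(\<integral>\<omega>. k * indicator B \<omega> \<partial>M) = k * measure M B"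
    for k :: real
    using assms(5) emeasure_finite[of B]
    by (simp_all add: Int_absorb2 sets.sets_into_space integrable_real_indicator less_top[symmetric])
  have "(\<integral>\<omega>. k1 * indicator B \<omega> \<partial>M) \<le> (\<integral>\<omega>. Z \<omega> * indicator B \<omega> \<partial>M)"
    using ae_B by (intro integral_mono_AE int_B(1) RN(1)) (auto elim: AE_mp)
  then show "k1 * measure M B \<le> measure Q B" using int_B(2)[of k1] RN(2) by linarith
  have "(\<integral>\<omega>. Z \<omega> * indicator B \<omega> \<partial>M) \<le> (\<integral>\<omega>. k2 * indicator B \<omega> \<partial>M)"
    using ae_B by (intro integral_mono_AE int_B(1) RN(1)) (auto elim: AE_mp)
  then show "measure Q B \<le> k2 * measure M B" using int_B(2)[of k2] RN(2) by linarith
qed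

section \<open>Distortions and the density band\<close>

definition distortion :: "(real \<Rightarrow> real) \<Rightarrow> bool" where
  "distortion g \<longleftrightarrow> (\<forall>x y. 0 \<le> x \<longrightarrow> x \<le> y \<longrightarrow> y \<le> 1 \<longrightarrow> g x \<le> g y)
     \<and> (\<forall>x y. 0 \<le> x \<longrightarrow> x < y \<longrightarrow> y \<le> 1 \<longrightarrow> g x < 1 \<longrightarrow> g x < g y)
     \<and> (\<forall>l. 0 < l \<longrightarrow> l < 1 \<longrightarrow> (\<exists>u. 0 < u \<and> u < 1 \<and> g u = l))"

lemma inv01_galois:
  assumes "distortion g" "0 < l" "l < 1"
  shows "0 < inv01 g l" "inv01 g l < 1" "g (inv01 g l) = l"
    and "\<And>p. 0 \<le> p \<Longrightarrow> p \<le> 1 \<Longrightarrow> g p \<le> l \<longleftrightarrow> p \<le> inv01 g l"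
proof -
  have mono: "g x \<le> g y" if "0 \<le> x" "x \<le> y" "y \<le> 1" for x y
    using assms(1) that by (simp add: distortion_def)
  have strict: "g x < g y" if "0 \<le> x" "x < y" "y \<le> 1" "g x < 1" for x y
    using assms(1) that by (simp add: distortion_def)
  obtain u where u: "0 < u" "u < 1" "g u = l"
    using assms unfolding distortion_def by blast
  have "inv01 g l = u"
    unfolding inv01_def
  proof (rule the_equality)
    fix v assume v: "0 < v \<and> v < 1 \<and> g v = l"
    show "v = u"
      using strict[of u v] strict[of v u] u v assms(3) by (cases u v rule: linorder_cases) auto
  qed (use u in simp)
  with u show "0 < inv01 g l" "inv01 g l < 1" "g (inv01 g l) = l" by simp_all
  show "g p \<le> l \<longleftrightarrow> p \<le> inv01 g l" if p: "0 \<le> p" "p \<le> 1" for p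
  proof
    assume "g p \<le> l"
    show "p \<le> inv01 g l"
    proof (rule ccontr)
      assume "\<not> p \<le> inv01 g l"
      then have "g u < g p" using strict[of u p] u p assms(3) \<open>inv01 g l = u\<close> by simp
      with \<open>g p \<le> l\<close> u show False by simp
    qed
  next
    assume "p \<le> inv01 g l"
    then show "g p \<le> l" using mono[of p u] u p \<open>inv01 g l = u\<close> by simp
  qed
qed

lemma inv01_comp_H_I:
  assumes "distortion g" "L \<in> H_I"
  shows "(\<lambda>x. inv01 g (L x)) \<in> H_I"
proof -
  have L: "mono L" "\<And>x. 0 < L x \<and> L x < 1" using assms(2) by (auto simp: H_I_def)
  note inv = inv01_galois[OF assms(1)]
  have "mono (\<lambda>x. inv01 g (L x))"
  proof (rule monoI)
    fix x y :: real assume "x \<le> y"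
    then have "g (inv01 g (L x)) \<le> L y" using inv(3) L monoD[OF L(1)] by simp
    moreover have "0 < inv01 g (L x)" "inv01 g (L x) < 1" using inv(1,2) L(2) by auto
    ultimately show "inv01 g (L x) \<le> inv01 g (L y)"
      using inv(4)[of "L y" "inv01 g (L x)"] L(2)[of y] by simp
  qed
  then show ?thesis using inv(1,2) L(2) by (simp add: H_I_def)
qed

lemma g_band_distortion:
  assumes "0 \<le> k1" "k1 < 1" "1 < k2"
  shows "distortion (g_band k1 k2)"
proof -
  have g: "g_band k1 k2 = (\<lambda>x. min (k2 * x) (k1 * x + 1 - k1))" by (simp add: g_band_def fun_eq_iff)
  have mono: "g_band k1 k2 x \<le> g_band k1 k2 y" if "x \<le> y" for x y
  proof -
    have "k2 * x \<le> k2 * y" "k1 * x \<le> k1 * y" using that assms by (simp_all add: mult_left_mono)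
    then show ?thesis by (auto simp: g min_def)
  qed
  have strict: "g_band k1 k2 x < g_band k1 k2 y" if "x < y" "g_band k1 k2 x < 1" for x y
  proof -
    have "g_band k1 k2 x < k2 * y" using that(1) assms by (simp add: g min.strict_coboundedI1)
    moreover have "g_band k1 k2 x < k1 * y + 1 - k1"
    proof (cases "k1 = 0")
      case True
      then show ?thesis using that(2) by simp
    next
      case False
      then have "k1 * x < k1 * y" using that(1) assms(1) by simp
      then show ?thesis by (simp add: g min.strict_coboundedI2)
    qed
    ultimately show ?thesis by (simp add: g)
  qed
  have "continuous_on {0..1} (g_band k1 k2)" unfolding g by (intro continuous_intros)
  moreover have "g_band k1 k2 0 = 0" "g_band k1 k2 1 = 1" using assms by (simp_all add: g)
  ultimately have onto: "\<exists>u. 0 < u \<and> u < 1 \<and> g_band k1 k2 u = l" if l: "0 < l" "l < 1" for l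
  proof -
    obtain u where "0 \<le> u" "u \<le> 1" "g_band k1 k2 u = l"
      using IVT'[of "g_band k1 k2" 0 l 1] l \<open>continuous_on {0..1} (g_band k1 k2)\<close>
        \<open>g_band k1 k2 0 = 0\<close> \<open>g_band k1 k2 1 = 1\<close> by auto
    moreover from this have "u \<noteq> 0" "u \<noteq> 1"
      using l \<open>g_band k1 k2 0 = 0\<close> \<open>g_band k1 k2 1 = 1\<close> by auto
    ultimately show ?thesis by (intro exI[of _ u]) auto
  qed
  show ?thesis
    unfolding distortion_def using mono strict onto by (intro conjI allI impI) simp_all
qed

lemma g_band_two_point_ratios:
  assumes "0 \<le> k1" "k1 < 1" "1 < k2" "0 < p" "p < 1"
  shows "0 \<le> g_band k1 k2 p" "g_band k1 k2 p \<le> 1"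
    and "k1 \<le> g_band k1 k2 p / p" "g_band k1 k2 p / p \<le> k2"
    and "k1 \<le> (1 - g_band k1 k2 p) / (1 - p)" "(1 - g_band k1 k2 p) / (1 - p) \<le> k2"
proof -
  define t where "t = g_band k1 k2 p"
  have t: "t \<le> k2 * p" "t \<le> k1 * p + 1 - k1" by (simp_all add: t_def g_band_def)
  have "k1 * p \<le> k2 * p" using assms by (intro mult_right_mono) auto
  moreover have "0 \<le> (k2 - k1) * (1 - p)" using assms by simp
  ultimately have t': "k1 * p \<le> t" "1 - k2 * (1 - p) \<le> t"
    using assms unfolding t_def g_band_def by (simp_all add: algebra_simps)
  have "0 \<le> k1 * p" "k1 * p \<le> k1" using assms by (simp_all add: mult_left_le)
  then show "0 \<le> t" "t \<le> 1" using t(2) t'(1) by linarith+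
  show "k1 \<le> t / p" "t / p \<le> k2"
    using t(1) t'(1) assms(4) by (simp_all add: le_divide_eq divide_le_eq mult.commute)
  show "k1 \<le> (1 - t) / (1 - p)" "(1 - t) / (1 - p) \<le> k2"
    using t(2) t'(2) assms(5) by (simp_all add: le_divide_eq divide_le_eq algebra_simps)
qed

lemma ratio_band_upper_prob:
  assumes "prob_space M" "0 \<le> k1" "k1 < 1" "1 < k2"
  shows "upper_prob_distortion M (ratio_band M k1 k2) (g_band k1 k2)"
proof (rule upper_prob_distortion_interior[OF assms(1)])
  interpret prob_space M by fact
  have "AE \<omega> in M. ennreal k1 \<le> RN_deriv M M \<omega> \<and> RN_deriv M M \<omega> \<le> ennreal k2"
    using RN_deriv_self[OF assms(1)] by eventually_elim (use assms in \<open>auto intro: ennreal_leI\<close>)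
  then show "M \<in> ratio_band M k1 k2"
    using self_in_abs_cont_probs[OF assms(1)] by (simp add: ratio_band_def)
  show "\<And>Q. Q \<in> ratio_band M k1 k2 \<Longrightarrow> prob_space Q \<and> sets Q = sets M"
    by (simp add: ratio_band_def abs_cont_probs_def)
  show "g_band k1 k2 0 = 0" "g_band k1 k2 1 = 1" using assms by (simp_all add: g_band_def)
  show "measure Q A \<le> g_band k1 k2 (measure M A)" if Q: "Q \<in> ratio_band M k1 k2" and A: "A \<in> sets M" for Q A
  proof -
    interpret Q: prob_space Q using Q by (simp add: ratio_band_def abs_cont_probs_def)
    have sets_Q: "sets Q = sets M" using Q by (simp add: ratio_band_def abs_cont_probs_def)
    have "k1 * measure M (space M - A) \<le> measure Q (space M - A)"
      using ratio_band_measure_bounds(1)[OF assms(1) Q assms(2) _ ] assms A by simp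
    moreover have "measure Q (space M - A) = 1 - measure Q A"
      using Q.prob_compl[of A] A sets_Q sets_eq_imp_space_eq[OF sets_Q] by simp
    moreover have "measure Q A \<le> k2 * measure M A"
      using ratio_band_measure_bounds(2)[OF assms(1) Q assms(2) _ A] assms by simp
    ultimately show ?thesis
      using A by (simp add: g_band_def prob_compl algebra_simps)
  qed
  fix A c assume A: "A \<in> sets M" "0 < measure M A" "measure M A < 1" "c < g_band k1 k2 (measure M A)"
  note r = g_band_two_point_ratios[OF assms(2-4) A(2,3)]
  define Q where "Q = two_point_density M A (g_band k1 k2 (measure M A))"
  note Q = two_point_density[OF assms(1) A(1-3) r(1,2), folded Q_def]
  have ratio_bounds: "k1 \<le> two_point_ratio M A (g_band k1 k2 (measure M A)) \<omega>
      \<and> two_point_ratio M A (g_band k1 k2 (measure M A)) \<omega> \<le> k2" for \<omega>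
    using r by (simp add: two_point_ratio_def)
  have "AE \<omega> in M. ennreal k1 \<le> RN_deriv M Q \<omega> \<and> RN_deriv M Q \<omega> \<le> ennreal k2"
    using Q(3) by eventually_elim (use ratio_bounds in \<open>auto intro: ennreal_leI\<close>)
  then have "Q \<in> ratio_band M k1 k2" using Q(1) by (simp add: ratio_band_def)
  with Q(2) A(4) show "\<exists>Q\<in>ratio_band M k1 k2. c < measure Q A" by force
qed

section \<open>phi-divergence balls\<close>

lemma strictly_convex_nonneg_imp_convex_on:
  assumes "strictly_convex_nonneg f"
  shows "convex_on {0..} f"
proof (rule convex_onI)
  fix t x y :: real
  assume t: "0 < t" "t < 1" and xy: "x \<in> {0..}" "y \<in> {0..}"
  show "f ((1 - t) *\<^sub>R x + t *\<^sub>R y) \<le> (1 - t) * f x + t * f y"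
  proof (cases "x = y")
    case True
    then show ?thesis by (simp add: algebra_simps)
  next
    case False
    have "f ((1 - t) * x + (1 - (1 - t)) * y) < (1 - t) * f x + (1 - (1 - t)) * f y"
      using assms[unfolded strictly_convex_nonneg_def, rule_format, of x y "1 - t"] False t xy by auto
    then show ?thesis by simp
  qed
qed (simp add: convex_real_interval)

lemma convex_on_nonneg_continuous_on_pos:
  fixes \<phi> :: "real \<Rightarrow> real"
  assumes "convex_on {0..} \<phi>"
  shows "continuous_on {0<..} \<phi>"
proof -
  have "convex_on {0<..} \<phi>" by (rule convex_on_subset[OF assms]) auto
  then show ?thesis by (intro convex_on_continuous) auto
qed

lemma convex_on_nonneg_supporting_line:
  fixes \<phi> :: "real \<Rightarrow> real"
  assumes "convex_on {0..} \<phi>" "m > 0"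
  obtains s where "\<And>z. z \<ge> 0 \<Longrightarrow> \<phi> z \<ge> \<phi> m + s * (z - m)"
  using convex_le_Inf_differential[OF assms(1), of m] assms(2) by auto

lemma convex_on_nonneg_comp_measurable:
  fixes \<phi> :: "real \<Rightarrow> real"
  assumes "convex_on {0..} \<phi>" "Z \<in> borel_measurable M" "\<And>\<omega>. 0 \<le> Z \<omega>"
  shows "(\<lambda>\<omega>. \<phi> (Z \<omega>)) \<in> borel_measurable M"
proof -
  \<comment> \<open>\<open>\<phi>\<close> may jump at \<open>0\<close>, so treat the point \<open>0\<close> separately\<close>
  define \<psi> where "\<psi> z = (if z \<in> {0<..} then \<phi> z else \<phi> 0)" for z :: real
  have "\<psi> \<in> borel_measurable borel" unfolding \<psi>_def
    by (rule borel_measurable_continuous_on_if)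
      (auto intro: convex_on_nonneg_continuous_on_pos[OF assms(1)])
  then have "(\<lambda>\<omega>. \<psi> (Z \<omega>)) \<in> borel_measurable M"
    using assms(2) by (rule measurable_compose[rotated])
  moreover have "\<psi> (Z \<omega>) = \<phi> (Z \<omega>)" for \<omega>
    using assms(3)[of \<omega>] by (cases "Z \<omega> = 0") (auto simp: \<psi>_def)
  ultimately show ?thesis by simp
qed

lemma jensen_on_set:
  fixes \<phi> :: "real \<Rightarrow> real"
  assumes "prob_space M" "convex_on {0..} \<phi>" "\<And>\<omega>. 0 \<le> Z \<omega>"
    and "B \<in> sets M" "0 < measure M B"
    and "integrable M (\<lambda>\<omega>. Z \<omega> * indicator B \<omega>)" "integrable M (\<lambda>\<omega>. \<phi> (Z \<omega>))"
  shows "measure M B * \<phi> ((\<integral>\<omega>. Z \<omega> * indicator B \<omega> \<partial>M) / measure M B)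
          \<le> (\<integral>\<omega>. \<phi> (Z \<omega>) * indicator B \<omega> \<partial>M)"
proof -
  interpret prob_space M by fact
  define a where "a = (\<integral>\<omega>. Z \<omega> * indicator B \<omega> \<partial>M)"
  define q where "q = measure M B"
  have int_B: "integrable M (\<lambda>\<omega>. c * indicator B \<omega>)" "(\<integral>\<omega>. c * indicator B \<omega> \<partial>M) = c * q" for c :: real
    using assms(4) emeasure_finite[of B]
    by (simp_all add: q_def Int_absorb2 sets.sets_into_space integrable_real_indicator less_top[symmetric])
  have int_\<phi>: "integrable M (\<lambda>\<omega>. \<phi> (Z \<omega>) * indicator B \<omega>)"
    using assms(4,7) by (rule integrable_real_mult_indicator)
  have "0 \<le> a" unfolding a_def using assms(3) by (intro integral_nonneg_AE) (auto simp: indicator_def)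
  \<comment> \<open>a supporting line of \<open>\<phi>\<close> exists at every positive point, but maybe not at \<open>0\<close>\<close>
  then consider "a = 0" | "0 < a / q" using assms(5) by (fastforce simp: q_def)
  then show ?thesis
  proof cases
    case 1
    then have "AE \<omega> in M. Z \<omega> * indicator B \<omega> = 0"
      using integral_nonneg_eq_0_iff_AE[OF assms(6)] assms(3) by (simp add: a_def)
    then have "AE \<omega> in M. \<phi> (Z \<omega>) * indicator B \<omega> = \<phi> 0 * indicator B \<omega>"
      by eventually_elim (auto simp: indicator_def)
    then have "(\<integral>\<omega>. \<phi> (Z \<omega>) * indicator B \<omega> \<partial>M) = (\<integral>\<omega>. \<phi> 0 * indicator B \<omega> \<partial>M)"
      using int_\<phi> int_B(1) by (intro integral_cong_AE borel_measurable_integrable)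
    then have "(\<integral>\<omega>. \<phi> (Z \<omega>) * indicator B \<omega> \<partial>M) = \<phi> 0 * q"
      using int_B(2) by simp
    with 1 show ?thesis by (simp add: a_def q_def mult.commute)
  next
    case 2
    define m where "m = a / q"
    obtain s where s: "\<And>z. z \<ge> 0 \<Longrightarrow> \<phi> z \<ge> \<phi> m + s * (z - m)"
      using convex_on_nonneg_supporting_line[OF assms(2) 2[folded m_def]] by blast
    have "(\<phi> m - s * m) * indicator B \<omega> + s * (Z \<omega> * indicator B \<omega>) \<le> \<phi> (Z \<omega>) * indicator B \<omega>" for \<omega>
      using s[OF assms(3)[of \<omega>]] by (simp add: indicator_def algebra_simps)
    then have "(\<integral>\<omega>. (\<phi> m - s * m) * indicator B \<omega> + s * (Z \<omega> * indicator B \<omega>) \<partial>M)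
        \<le> (\<integral>\<omega>. \<phi> (Z \<omega>) * indicator B \<omega> \<partial>M)"
      by (intro integral_mono Bochner_Integration.integrable_add integrable_mult_right int_B(1) assms(6) int_\<phi>)
    moreover have "(\<integral>\<omega>. (\<phi> m - s * m) * indicator B \<omega> + s * (Z \<omega> * indicator B \<omega>) \<partial>M)
        = (\<phi> m - s * m) * q + s * a"
      using int_B(2)[of "\<phi> m - s * m"]
      by (simp add: a_def Bochner_Integration.integral_add[OF int_B(1) integrable_mult_right[OF assms(6)]])
    moreover have "(\<phi> m - s * m) * q + s * a = q * \<phi> m"
      using assms(5) by (simp add: m_def q_def algebra_simps)
    ultimately show ?thesis by (simp add: m_def a_def q_def)
  qed
qed

(* The phi-divergence of Bernoulli(t) from Bernoulli(x); g_phi \<phi> \<delta> x is the largest t \<ge> x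
   at which it is at most \<delta>. *)
definition bernoulli_div :: "(real \<Rightarrow> real) \<Rightarrow> real \<Rightarrow> real \<Rightarrow> real" where
  "bernoulli_div \<phi> x t = x * \<phi> (t / x) + (1 - x) * \<phi> ((1 - t) / (1 - x))"

lemma phi_ball_bernoulli_div_le:
  fixes \<phi> :: "real \<Rightarrow> real"
  assumes "prob_space M" "convex_on {0..} \<phi>" "Q \<in> phi_ball M \<phi> \<delta>"
    and "A \<in> sets M" "0 < measure M A" "measure M A < 1"
  shows "bernoulli_div \<phi> (measure M A) (measure Q A) \<le> \<delta>"
proof -
  interpret prob_space M by fact
  define Z where "Z \<omega> = enn2real (RN_deriv M Q \<omega>)" for \<omega>
  have Q: "Q \<in> abs_cont_probs M" "integrable M (\<lambda>\<omega>. \<phi> (Z \<omega>))" "(\<integral>\<omega>. \<phi> (Z \<omega>) \<partial>M) \<le> \<delta>"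
    using assms(3) by (auto simp: phi_ball_def Z_def)
  interpret Q: prob_space Q using Q(1) by (simp add: abs_cont_probs_def)
  have sets_Q: "sets Q = sets M" using Q(1) by (simp add: abs_cont_probs_def)
  define C where "C = space M - A"
  have C: "C \<in> sets M" "measure M C = 1 - measure M A" "measure Q C = 1 - measure Q A"
    using assms(4) Q.prob_compl[of A] sets_Q sets_eq_imp_space_eq[OF sets_Q]
    by (simp_all add: C_def prob_compl)
  note RN = measure_eq_integral_RN_deriv[OF assms(1) Q(1), folded Z_def]
  have "measure M A * \<phi> (measure Q A / measure M A) \<le> (\<integral>\<omega>. \<phi> (Z \<omega>) * indicator A \<omega> \<partial>M)"
    using jensen_on_set[OF assms(1,2) _ assms(4,5) RN(1)[OF assms(4)] Q(2)] RN(2)[OF assms(4)]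
    by (simp add: Z_def)
  moreover have "measure M C * \<phi> (measure Q C / measure M C) \<le> (\<integral>\<omega>. \<phi> (Z \<omega>) * indicator C \<omega> \<partial>M)"
    using jensen_on_set[OF assms(1,2) _ C(1) _ RN(1)[OF C(1)] Q(2)] RN(2)[OF C(1)] C(2) assms(6)
    by (simp add: Z_def)
  moreover have "(\<integral>\<omega>. \<phi> (Z \<omega>) \<partial>M) = (\<integral>\<omega>. \<phi> (Z \<omega>) * indicator A \<omega> + \<phi> (Z \<omega>) * indicator C \<omega> \<partial>M)"
    by (rule Bochner_Integration.integral_cong) (auto simp: C_def indicator_def)
  moreover have "\<dots> = (\<integral>\<omega>. \<phi> (Z \<omega>) * indicator A \<omega> \<partial>M) + (\<integral>\<omega>. \<phi> (Z \<omega>) * indicator C \<omega> \<partial>M)"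
    using Q(2) assms(4) C(1) by (intro Bochner_Integration.integral_add integrable_real_mult_indicator)
  ultimately show ?thesis
    using Q(3) C(2,3) by (simp add: bernoulli_div_def)
qed

lemma two_point_density_in_phi_ball:
  fixes \<phi> :: "real \<Rightarrow> real"
  assumes "prob_space M" "convex_on {0..} \<phi>" "A \<in> sets M" "0 < measure M A" "measure M A < 1"
    and "0 \<le> t" "t \<le> 1" "bernoulli_div \<phi> (measure M A) t \<le> \<delta>"
  shows "two_point_density M A t \<in> phi_ball M \<phi> \<delta>"
proof -
  interpret prob_space M by fact
  define p where "p = measure M A"
  define Q where "Q = two_point_density M A t"
  define Z where "Z \<omega> = enn2real (RN_deriv M Q \<omega>)" for \<omega>
  note Q = two_point_density[OF assms(1,3-7), folded Q_def]
  define h where "h \<omega> = \<phi> (t / p) * indicator A \<omega> + \<phi> ((1 - t) / (1 - p)) * indicator (space M - A) \<omega>" for \<omega>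
  have "AE \<omega> in M. h \<omega> = \<phi> (Z \<omega>)"
    using Q(3) AE_space
  proof eventually_elim
    case (elim \<omega>)
    then show ?case
      using assms(4-7) by (auto simp: h_def Z_def two_point_ratio_def p_def indicator_def)
  qed
  moreover have int_h: "integrable M h" "(\<integral>\<omega>. h \<omega> \<partial>M) = bernoulli_div \<phi> p t"
  proof -
    have ind: "integrable M (indicat_real A)" "integrable M (indicat_real (space M - A))"
      using assms(3) emeasure_finite[of A] emeasure_finite[of "space M - A"]
      by (auto intro!: integrable_real_indicator simp: less_top[symmetric])
    show "integrable M h"
      unfolding h_def by (intro Bochner_Integration.integrable_add integrable_mult_right ind)
    have "(\<integral>\<omega>. h \<omega> \<partial>M) = \<phi> (t / p) * measure M A + \<phi> ((1 - t) / (1 - p)) * measure M (space M - A)"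
      unfolding h_def using ind assms(3) by (simp add: Int_absorb2 sets.sets_into_space)
    then show "(\<integral>\<omega>. h \<omega> \<partial>M) = bernoulli_div \<phi> p t"
      using assms(3) by (simp add: bernoulli_div_def p_def prob_compl mult.commute)
  qed
  moreover have "(\<lambda>\<omega>. \<phi> (Z \<omega>)) \<in> borel_measurable M"
    unfolding Z_def by (rule convex_on_nonneg_comp_measurable[OF assms(2)]) auto
  ultimately have "integrable M (\<lambda>\<omega>. \<phi> (Z \<omega>))" "(\<integral>\<omega>. \<phi> (Z \<omega>) \<partial>M) = bernoulli_div \<phi> p t"
    by (auto intro: integrable_cong_AE_imp integral_cong_AE[symmetric, THEN trans] borel_measurable_integrable)
  then show ?thesis
    using Q(1) assms(8) by (simp add: phi_ball_def Z_def Q_def p_def)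
qed

lemma self_in_phi_ball:
  fixes \<phi> :: "real \<Rightarrow> real"
  assumes "prob_space M" "convex_on {0..} \<phi>" "\<phi> 1 = 0" "0 \<le> \<delta>"
  shows "M \<in> phi_ball M \<phi> \<delta>"
proof -
  have AE: "AE \<omega> in M. 0 = \<phi> (enn2real (RN_deriv M M \<omega>))"
    using RN_deriv_self[OF assms(1)] by eventually_elim (simp add: assms(3))
  moreover have "(\<lambda>\<omega>. \<phi> (enn2real (RN_deriv M M \<omega>))) \<in> borel_measurable M"
    by (rule convex_on_nonneg_comp_measurable[OF assms(2)]) auto
  ultimately have "integrable M (\<lambda>\<omega>. \<phi> (enn2real (RN_deriv M M \<omega>)))"
    "(\<integral>\<omega>. \<phi> (enn2real (RN_deriv M M \<omega>)) \<partial>M) = 0"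
    by (auto intro: integrable_cong_AE_imp integral_eq_zero_AE AE_mp[OF AE])
  then show ?thesis
    using assms(4) self_in_abs_cont_probs[OF assms(1)] by (simp add: phi_ball_def)
qed

lemma perspective_convex:
  fixes \<phi> :: "real \<Rightarrow> real"
  assumes cv: "convex_on {0..} \<phi>" and "0 \<le> y" "0 \<le> a" "0 \<le> b" "y > 0 \<longrightarrow> a > 0 \<and> b > 0"
    and l: "0 \<le> l" "l \<le> 1"
  shows "(l * a + (1 - l) * b) * \<phi> (y / (l * a + (1 - l) * b))
         \<le> l * (a * \<phi> (y / a)) + (1 - l) * (b * \<phi> (y / b))"
proof (cases "y = 0")
  case True
  then show ?thesis by (simp add: algebra_simps)
next
  case False
  with assms(2,5) have y: "0 < y" and ab: "0 < a" "0 < b" by auto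
  define x where "x = l * a + (1 - l) * b"
  define m where "m = l * a / x"
  have x: "0 < x" using ab l by (cases "l = 0") (auto simp: x_def intro: add_pos_nonneg)
  have m: "0 \<le> m" "m \<le> 1" "x * m = l * a" "x * (1 - m) = (1 - l) * b"
    using x ab l by (auto simp: m_def x_def field_simps)
  have "1 - m = (1 - l) * b / x" using m(4) x by (simp add: field_simps)
  then have "m * (y / a) = l * y / x" "(1 - m) * (y / b) = (1 - l) * y / x"
    using ab by (simp_all add: m_def)
  then have "y / x = m * (y / a) + (1 - m) * (y / b)"
    by (simp add: add_divide_distrib[symmetric] algebra_simps)
  then have "\<phi> (y / x) \<le> m * \<phi> (y / a) + (1 - m) * \<phi> (y / b)"
    using convex_onD[OF cv, of "1 - m" "y / a" "y / b"] m(1,2) y ab by simp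
  then have "x * \<phi> (y / x) \<le> x * (m * \<phi> (y / a) + (1 - m) * \<phi> (y / b))"
    using x by (intro mult_left_mono) auto
  also have "\<dots> = (x * m) * \<phi> (y / a) + (x * (1 - m)) * \<phi> (y / b)"
    by (simp add: algebra_simps)
  also have "\<dots> = l * (a * \<phi> (y / a)) + (1 - l) * (b * \<phi> (y / b))"
    by (simp only: m(3,4) mult.assoc)
  finally show ?thesis by (simp only: x_def)
qed

lemma bernoulli_div_convex_left:
  fixes \<phi> :: "real \<Rightarrow> real"
  assumes cv: "convex_on {0..} \<phi>" and t: "0 \<le> t" "t \<le> 1"
    and a: "0 < a" "a \<le> 1" and b: "0 < b" "b \<le> 1" and lt: "t < 1 \<longrightarrow> a < 1 \<and> b < 1"
    and l: "0 \<le> l" "l \<le> 1"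
  shows "bernoulli_div \<phi> (l * a + (1 - l) * b) t \<le> l * bernoulli_div \<phi> a t + (1 - l) * bernoulli_div \<phi> b t"
proof -
  have p1: "(l * a + (1 - l) * b) * \<phi> (t / (l * a + (1 - l) * b))
         \<le> l * (a * \<phi> (t / a)) + (1 - l) * (b * \<phi> (t / b))"
    using perspective_convex[OF cv t(1) _ _ _ l] a b by auto
  have p2: "(l * (1 - a) + (1 - l) * (1 - b)) * \<phi> ((1 - t) / (l * (1 - a) + (1 - l) * (1 - b)))
         \<le> l * ((1 - a) * \<phi> ((1 - t) / (1 - a))) + (1 - l) * ((1 - b) * \<phi> ((1 - t) / (1 - b)))"
    using perspective_convex[OF cv _ _ _ _ l, of "1 - t" "1 - a" "1 - b"] a b t lt by auto
  have e: "l * (1 - a) + (1 - l) * (1 - b) = 1 - (l * a + (1 - l) * b)" by (simp add: algebra_simps)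
  show ?thesis using p1 p2 unfolding e bernoulli_div_def by (simp add: algebra_simps)
qed

lemma bernoulli_div_convex_right:
  fixes \<phi> :: "real \<Rightarrow> real"
  assumes cv: "convex_on {0..} \<phi>" and x: "0 < x" "x < 1"
    and a: "0 \<le> a" "a \<le> 1" and b: "0 \<le> b" "b \<le> 1" and l: "0 \<le> l" "l \<le> 1"
  shows "bernoulli_div \<phi> x (l * a + (1 - l) * b) \<le> l * bernoulli_div \<phi> x a + (1 - l) * bernoulli_div \<phi> x b"
proof -
  have c1: "\<phi> (l * (a / x) + (1 - l) * (b / x)) \<le> l * \<phi> (a / x) + (1 - l) * \<phi> (b / x)"
    using convex_onD[OF cv, of "1 - l" "a / x" "b / x"] l a b x by (simp add: algebra_simps)
  have c2: "\<phi> (l * ((1 - a) / (1 - x)) + (1 - l) * ((1 - b) / (1 - x)))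
      \<le> l * \<phi> ((1 - a) / (1 - x)) + (1 - l) * \<phi> ((1 - b) / (1 - x))"
    using convex_onD[OF cv, of "1 - l" "(1 - a) / (1 - x)" "(1 - b) / (1 - x)"] l a b x by (simp add: algebra_simps)
  have e1: "(l * a + (1 - l) * b) / x = l * (a / x) + (1 - l) * (b / x)"
    by (simp add: add_divide_distrib)
  have e2: "(1 - (l * a + (1 - l) * b)) / (1 - x) = l * ((1 - a) / (1 - x)) + (1 - l) * ((1 - b) / (1 - x))"
  proof -
    have "1 - (l * a + (1 - l) * b) = l * (1 - a) + (1 - l) * (1 - b)" by (simp add: algebra_simps)
    then show ?thesis by (simp add: add_divide_distrib)
  qed
  have "x * \<phi> (l * (a / x) + (1 - l) * (b / x)) \<le> x * (l * \<phi> (a / x) + (1 - l) * \<phi> (b / x))"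
    using c1 x by (intro mult_left_mono) auto
  moreover have "(1 - x) * \<phi> (l * ((1 - a) / (1 - x)) + (1 - l) * ((1 - b) / (1 - x)))
      \<le> (1 - x) * (l * \<phi> ((1 - a) / (1 - x)) + (1 - l) * \<phi> ((1 - b) / (1 - x)))"
    using c2 x by (intro mult_left_mono) auto
  ultimately show ?thesis unfolding bernoulli_div_def e1 e2 by (simp add: algebra_simps)
qed

lemma bernoulli_div_self:
  assumes "\<phi> 1 = 0" "0 < t" "t \<le> 1"
  shows "bernoulli_div \<phi> t t = 0"
  using assms by (cases "t = 1") (simp_all add: bernoulli_div_def)

lemma continuous_on_bernoulli_div_right:
  fixes \<phi> :: "real \<Rightarrow> real"
  assumes cv: "convex_on {0..} \<phi>" and x: "0 < x" "x < 1"
  shows "continuous_on {0<..<1} (bernoulli_div \<phi> x)"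
proof -
  have pc: "continuous_on {0<..} \<phi>" by (rule convex_on_nonneg_continuous_on_pos[OF cv])
  have c1: "continuous_on {0<..<1} (\<lambda>t. \<phi> (t / x))"
    by (rule continuous_on_compose2[OF pc]) (use x in \<open>auto intro!: continuous_intros\<close>)
  have c2: "continuous_on {0<..<1} (\<lambda>t. \<phi> ((1 - t) / (1 - x)))"
    by (rule continuous_on_compose2[OF pc]) (use x in \<open>auto intro!: continuous_intros\<close>)
  show ?thesis unfolding bernoulli_div_def using c1 c2 by (intro continuous_intros)
qed

lemma continuous_on_bernoulli_div_left:
  fixes \<phi> :: "real \<Rightarrow> real"
  assumes cv: "convex_on {0..} \<phi>" and l: "0 < l" "l < 1" and a: "0 < a"
  shows "continuous_on {a..l} (\<lambda>x. bernoulli_div \<phi> x l)"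
proof -
  have pc: "continuous_on {0<..} \<phi>" by (rule convex_on_nonneg_continuous_on_pos[OF cv])
  have c1: "continuous_on {a..l} (\<lambda>x. \<phi> (l / x))"
    by (rule continuous_on_compose2[OF pc]) (use a l in \<open>auto intro!: continuous_intros\<close>)
  have c2: "continuous_on {a..l} (\<lambda>x. \<phi> ((1 - l) / (1 - x)))"
    by (rule continuous_on_compose2[OF pc]) (use a l in \<open>auto intro!: continuous_intros\<close>)
  show ?thesis unfolding bernoulli_div_def using c1 c2 by (intro continuous_intros)
qed

definition div_sublevel :: "(real \<Rightarrow> real) \<Rightarrow> real \<Rightarrow> real \<Rightarrow> real set" where
  "div_sublevel \<phi> \<delta> x = {t. x \<le> t \<and> t \<le> 1 \<and> bernoulli_div \<phi> x t \<le> \<delta>}"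

lemma g_phi_eq_Sup: "0 < x \<Longrightarrow> x < 1 \<Longrightarrow> g_phi \<phi> \<delta> x = Sup (div_sublevel \<phi> \<delta> x)"
  by (simp add: g_phi_def div_sublevel_def bernoulli_div_def)

context
  fixes \<phi> :: "real \<Rightarrow> real" and \<delta> :: real
  assumes cv: "convex_on {0..} \<phi>" and \<phi>1: "\<phi> 1 = 0" and \<delta>: "\<delta> > 0"
begin

lemma div_sublevel_facts:
  assumes x: "0 < x" "x < 1"
  shows "x \<in> div_sublevel \<phi> \<delta> x" "bdd_above (div_sublevel \<phi> \<delta> x)" "div_sublevel \<phi> \<delta> x \<noteq> {}"
    "\<And>t. t \<in> div_sublevel \<phi> \<delta> x \<Longrightarrow> t \<le> g_phi \<phi> \<delta> x"
    "x \<le> g_phi \<phi> \<delta> x" "g_phi \<phi> \<delta> x \<le> 1"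
proof -
  show xS: "x \<in> div_sublevel \<phi> \<delta> x" using bernoulli_div_self[of \<phi>, OF \<phi>1 x(1)] x \<delta> by (simp add: div_sublevel_def)
  show bdd: "bdd_above (div_sublevel \<phi> \<delta> x)" by (rule bdd_aboveI[of _ 1]) (auto simp: div_sublevel_def)
  show ne: "div_sublevel \<phi> \<delta> x \<noteq> {}" using xS by auto
  show le: "\<And>t. t \<in> div_sublevel \<phi> \<delta> x \<Longrightarrow> t \<le> g_phi \<phi> \<delta> x"
    using cSup_upper[OF _ bdd] g_phi_eq_Sup[OF x] by simp
  show "x \<le> g_phi \<phi> \<delta> x" by (rule le[OF xS])
  show "g_phi \<phi> \<delta> x \<le> 1" unfolding g_phi_eq_Sup[OF x] by (rule cSup_least[OF ne]) (auto simp: div_sublevel_def)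
qed

lemma g_phi_range: "0 \<le> x \<Longrightarrow> x \<le> 1 \<Longrightarrow> x \<le> g_phi \<phi> \<delta> x \<and> g_phi \<phi> \<delta> x \<le> 1"
  using div_sublevel_facts(5,6)[of x] by (cases "x = 0 \<or> x = 1") (auto simp: g_phi_def)

lemma g_phi_attained:
  assumes x: "0 < x" "x < 1" and g1: "g_phi \<phi> \<delta> x < 1"
  shows "bernoulli_div \<phi> x (g_phi \<phi> \<delta> x) \<le> \<delta>"
proof (rule ccontr)
  define T where "T = g_phi \<phi> \<delta> x"
  assume "\<not> bernoulli_div \<phi> x (g_phi \<phi> \<delta> x) \<le> \<delta>"
  then have gt: "bernoulli_div \<phi> x T > \<delta>" by (simp add: T_def)
  have T: "0 < T" "T < 1" using div_sublevel_facts(5)[OF x] x g1 by (auto simp: T_def)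
  obtain d where d: "d > 0" "\<And>s. s \<in> {0<..<1} \<Longrightarrow> \<bar>s - T\<bar> < d
      \<Longrightarrow> \<bar>bernoulli_div \<phi> x s - bernoulli_div \<phi> x T\<bar> < bernoulli_div \<phi> x T - \<delta>"
  proof -
    have "\<exists>d>0. \<forall>s\<in>{0<..<1}. dist s T < d \<longrightarrow>
        dist (bernoulli_div \<phi> x s) (bernoulli_div \<phi> x T) < bernoulli_div \<phi> x T - \<delta>"
      using continuous_on_bernoulli_div_right[OF cv x, unfolded continuous_on_iff] T gt by simp
    then show ?thesis using that by (auto simp: dist_real_def)
  qed
  have "T - d < Sup (div_sublevel \<phi> \<delta> x)" using d(1) g_phi_eq_Sup[OF x] by (simp add: T_def)
  then obtain t where t: "t \<in> div_sublevel \<phi> \<delta> x" "T - d < t"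
    using less_cSup_iff[OF div_sublevel_facts(3)[OF x] div_sublevel_facts(2)[OF x]] by blast
  have "t \<le> T" using div_sublevel_facts(4)[OF x t(1)] by (simp add: T_def)
  then have "\<bar>t - T\<bar> < d" using t(2) by simp
  moreover have "t \<in> {0<..<1}" using t x \<open>t \<le> T\<close> T by (auto simp: div_sublevel_def)
  ultimately have "bernoulli_div \<phi> x t > \<delta>" using d(2)[of t] by linarith
  then show False using t(1) by (simp add: div_sublevel_def)
qed

lemma bernoulli_div_lt_level_closer:
  assumes x: "0 < x1" "x1 < x2" "x2 < t" "t \<le> 1" and H: "bernoulli_div \<phi> x1 t \<le> \<delta>"
  shows "bernoulli_div \<phi> x2 t < \<delta>"
proof -
  define l where "l = (t - x2) / (t - x1)"
  have l: "0 < l" "l < 1" using x by (auto simp: l_def)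
  have "l * (t - x1) = t - x2" using x by (simp add: l_def)
  then have e: "l * x1 + (1 - l) * t = x2" by (simp add: algebra_simps)
  have "bernoulli_div \<phi> (l * x1 + (1 - l) * t) t \<le> l * bernoulli_div \<phi> x1 t + (1 - l) * bernoulli_div \<phi> t t"
    by (rule bernoulli_div_convex_left[OF cv]) (use x l in auto)
  also have "bernoulli_div \<phi> t t = 0" using bernoulli_div_self[of \<phi>, OF \<phi>1] x by simp
  finally have le: "bernoulli_div \<phi> x2 t \<le> l * bernoulli_div \<phi> x1 t" unfolding e by simp
  show ?thesis
  proof (cases "bernoulli_div \<phi> x1 t \<ge> 0")
    case True
    have "l * bernoulli_div \<phi> x1 t \<le> l * \<delta>" using H l by (simp add: mult_left_mono)
    also have "\<dots> < \<delta>" using l \<delta> by simp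
    finally show ?thesis using le by simp
  next
    case False
    then have "l * bernoulli_div \<phi> x1 t < 0" using l by (simp add: mult_pos_neg)
    then show ?thesis using le \<delta> by simp
  qed
qed

lemma g_phi_mono:
  assumes x: "0 \<le> x1" "x1 \<le> x2" "x2 \<le> 1"
  shows "g_phi \<phi> \<delta> x1 \<le> g_phi \<phi> \<delta> x2"
proof -
  have g: "x1 \<le> g_phi \<phi> \<delta> x1" "g_phi \<phi> \<delta> x1 \<le> 1" "x2 \<le> g_phi \<phi> \<delta> x2"
    using g_phi_range x by auto
  consider "x1 = 0" | "x2 = 1" | "0 < x1" "x2 < 1" using x by linarith
  then show ?thesis
  proof cases
    case 1
    then show ?thesis using g x by (simp add: g_phi_def)
  next
    case 2
    then show ?thesis using g by (simp add: g_phi_def)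
  next
    case 3
    then have x1: "x1 < 1" using x by simp
    show ?thesis unfolding g_phi_eq_Sup[OF 3(1) x1]
    proof (rule cSup_least[OF div_sublevel_facts(3)[OF 3(1) x1]])
      fix t assume t: "t \<in> div_sublevel \<phi> \<delta> x1"
      show "t \<le> g_phi \<phi> \<delta> x2"
      proof (cases "t \<le> x2")
        case True
        then show ?thesis using g by simp
      next
        case False
        with t x 3 have "bernoulli_div \<phi> x2 t \<le> \<delta>"
          by (cases "x1 = x2") (auto simp: div_sublevel_def intro: less_imp_le[OF bernoulli_div_lt_level_closer])
        with t False have "t \<in> div_sublevel \<phi> \<delta> x2" by (simp add: div_sublevel_def)
        then show ?thesis using 3 x by (intro div_sublevel_facts(4)) auto
      qed
    qed
  qed
qed

lemma g_phi_gt_strict_sublevel: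
  assumes x: "0 < x" "x < 1" and T: "x \<le> T" "T < 1" and H: "bernoulli_div \<phi> x T < \<delta>"
  shows "T < g_phi \<phi> \<delta> x"
proof -
  have "\<exists>d>0. \<forall>s\<in>{0<..<1}. dist s T < d \<longrightarrow>
      dist (bernoulli_div \<phi> x s) (bernoulli_div \<phi> x T) < \<delta> - bernoulli_div \<phi> x T"
    using continuous_on_bernoulli_div_right[OF cv x, unfolded continuous_on_iff] x T H by simp
  then obtain d where d: "d > 0" "\<And>s. s \<in> {0<..<1} \<Longrightarrow> \<bar>s - T\<bar> < d
      \<Longrightarrow> \<bar>bernoulli_div \<phi> x s - bernoulli_div \<phi> x T\<bar> < \<delta> - bernoulli_div \<phi> x T"
    by (auto simp: dist_real_def)
  define t where "t = T + min (d / 2) ((1 - T) / 2)"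
  have t: "T < t" "t < 1" "\<bar>t - T\<bar> < d" using d(1) T by (auto simp: t_def min_def field_simps)
  then have "t \<in> {0<..<1}" using x T by auto
  from d(2)[OF this t(3)] have "bernoulli_div \<phi> x t < \<delta>" by linarith
  with t T have "t \<in> div_sublevel \<phi> \<delta> x" by (simp add: div_sublevel_def)
  with t(1) show ?thesis using div_sublevel_facts(4)[OF x] by fastforce
qed

lemma g_phi_strict:
  assumes x: "0 \<le> x1" "x1 < x2" "x2 \<le> 1" and g1: "g_phi \<phi> \<delta> x1 < 1"
  shows "g_phi \<phi> \<delta> x1 < g_phi \<phi> \<delta> x2"
proof -
  have g2: "x2 \<le> g_phi \<phi> \<delta> x2" using g_phi_range x by simp
  consider "x1 = 0" | "x2 = 1" | "0 < x1" "x2 < 1" using x by linarith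
  then show ?thesis
  proof cases
    case 1
    then show ?thesis using g2 x by (simp add: g_phi_def)
  next
    case 2
    then show ?thesis using g1 by (simp add: g_phi_def)
  next
    case 3
    define T where "T = g_phi \<phi> \<delta> x1"
    show ?thesis
    proof (cases "T < x2")
      case True
      then show ?thesis using g2 by (simp add: T_def)
    next
      case False
      \<comment> \<open>\<open>T\<close> is a point of the sublevel set at \<open>x1\<close>, hence strictly inside the one at \<open>x2\<close>\<close>
      have "bernoulli_div \<phi> x2 T < \<delta>"
      proof (cases "T = x2")
        case True
        then show ?thesis using bernoulli_div_self[of \<phi>, OF \<phi>1, of x2] 3 x \<delta> by simp
      next
        case False
        then have "x2 < T" using \<open>\<not> T < x2\<close> by simp
        moreover have "bernoulli_div \<phi> x1 T \<le> \<delta>"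
          using g_phi_attained[OF 3(1) _ g1] 3 x by (simp add: T_def)
        ultimately show ?thesis using bernoulli_div_lt_level_closer[OF 3(1) x(2)] g1 by (simp add: T_def)
      qed
      then show ?thesis
        using g_phi_gt_strict_sublevel[of x2 T] False g1 3 x by (simp add: T_def)
    qed
  qed
qed

lemma bernoulli_div_exceeds:
  assumes "filterlim (\<lambda>x. \<phi> x / x) at_top at_top" "0 < l" "l < 1"
  obtains x where "0 < x" "x < l" "\<delta> \<le> bernoulli_div \<phi> x l"
proof -
  obtain s where s: "\<And>z. 0 \<le> z \<Longrightarrow> \<phi> 1 + s * (z - 1) \<le> \<phi> z"
    using convex_on_nonneg_supporting_line[OF cv zero_less_one] by blast
  have lower: "- \<bar>s\<bar> \<le> \<phi> w" if "0 \<le> w" "w \<le> 1" for w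
  proof -
    have "\<bar>s * (w - 1)\<bar> \<le> \<bar>s\<bar>" using that by (simp add: abs_mult mult_left_le)
    then show ?thesis using s[OF that(1)] \<phi>1 by linarith
  qed
  \<comment> \<open>superlinearity makes the first term of the divergence large for small \<open>x\<close>,
      while the second one stays bounded below\<close>
  have "\<forall>\<^sub>F z in at_top. (\<delta> + \<bar>s\<bar>) / l \<le> \<phi> z / z"
    using assms(1) by (simp add: filterlim_at_top)
  then obtain Z where Z: "\<And>z. Z \<le> z \<Longrightarrow> (\<delta> + \<bar>s\<bar>) / l \<le> \<phi> z / z"
    by (auto simp: eventually_at_top_linorder)
  define z where "z = max Z 2"
  have z: "2 \<le> z" "(\<delta> + \<bar>s\<bar>) / l \<le> \<phi> z / z" using Z[of z] by (simp_all add: z_def)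
  define x where "x = l / z"
  have x: "0 < x" "x < l" "l / x = z" using assms(2) z(1) by (auto simp: x_def field_simps)
  have "\<delta> + \<bar>s\<bar> \<le> x * \<phi> (l / x)"
    using z(2) assms(2) x(3) by (simp add: x_def field_simps)
  moreover have "- \<bar>s\<bar> \<le> (1 - x) * \<phi> ((1 - l) / (1 - x))"
  proof -
    have "(1 - x) * (- \<bar>s\<bar>) \<le> (1 - x) * \<phi> ((1 - l) / (1 - x))"
      using lower[of "(1 - l) / (1 - x)"] x assms(3) by (intro mult_left_mono) auto
    moreover have "(1 - x) * \<bar>s\<bar> \<le> \<bar>s\<bar>" using x assms(3) by (intro mult_left_le_one_le) auto
    ultimately show ?thesis by simp
  qed
  ultimately show ?thesis
    using that x(1,2) by (simp add: bernoulli_div_def)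
qed

lemma div_sublevel_le_level_point:
  assumes "0 < x" "x < l" "bernoulli_div \<phi> x l = \<delta>" "t \<in> div_sublevel \<phi> \<delta> x"
  shows "t \<le> l"
proof (rule ccontr)
  assume "\<not> t \<le> l"
  define w where "w = (t - l) / (t - x)"
  have w: "0 < w" "w < 1" using \<open>\<not> t \<le> l\<close> assms(2) by (auto simp: w_def)
  have "w * (t - x) = t - l" using \<open>\<not> t \<le> l\<close> assms(2) by (simp add: w_def)
  then have w_comb: "w * x + (1 - w) * t = l" by (simp add: algebra_simps)
  have t: "t \<le> 1" "bernoulli_div \<phi> x t \<le> \<delta>" using assms(4) by (auto simp: div_sublevel_def)
  \<comment> \<open>\<open>bernoulli_div \<phi> x\<close> is convex and vanishes at \<open>x\<close>, so its value \<open>\<delta>\<close> at \<open>l\<close> is below \<open>(1 - w) * \<delta>\<close>\<close>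
  have "bernoulli_div \<phi> x (w * x + (1 - w) * t) \<le> w * bernoulli_div \<phi> x x + (1 - w) * bernoulli_div \<phi> x t"
    by (rule bernoulli_div_convex_right[OF cv]) (use assms(1,2) t w \<open>\<not> t \<le> l\<close> in auto)
  also have "\<dots> \<le> (1 - w) * \<delta>"
  proof -
    have "bernoulli_div \<phi> x x = 0"
      using bernoulli_div_self[of \<phi>, OF \<phi>1, of x] assms(1,2) t(1) \<open>\<not> t \<le> l\<close> by simp
    then show ?thesis using t(2) w(2) by (simp add: mult_left_mono)
  qed
  finally show False
    using assms(3) w w_comb \<delta> by (simp add: algebra_simps mult_le_0_iff)
qed

lemma g_phi_surj:
  assumes "filterlim (\<lambda>x. \<phi> x / x) at_top at_top" "0 < l" "l < 1"
  shows "\<exists>u. 0 < u \<and> u < 1 \<and> g_phi \<phi> \<delta> u = l"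
proof -
  obtain x where x: "0 < x" "x < l" "\<delta> \<le> bernoulli_div \<phi> x l"
    using bernoulli_div_exceeds[OF assms] .
  have "bernoulli_div \<phi> l l = 0" using bernoulli_div_self[of \<phi>, OF \<phi>1] assms(2,3) by simp
  then obtain u where u: "x \<le> u" "u \<le> l" "bernoulli_div \<phi> u l = \<delta>"
    using IVT2'[of "\<lambda>u. bernoulli_div \<phi> u l" l \<delta> x] continuous_on_bernoulli_div_left[OF cv assms(2,3) x(1)] x \<delta>
    by auto
  then have u': "0 < u" "u < l" "u < 1"
    using x \<delta> \<open>bernoulli_div \<phi> l l = 0\<close> assms(3) by (auto simp: order.order_iff_strict)
  have "l \<in> div_sublevel \<phi> \<delta> u" using u u' assms(3) by (simp add: div_sublevel_def)
  then have "g_phi \<phi> \<delta> u = l"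
    unfolding g_phi_eq_Sup[OF u'(1,3)]
    using div_sublevel_le_level_point[OF u'(1,2) u(3)] by (intro cSup_eq_maximum) auto
  with u' show ?thesis by blast
qed

end

section \<open>The robust inf-convolution\<close>

lemma g_phi_distortion:
  assumes "convex_on {0..} \<phi>" "\<phi> 1 = 0" "\<delta> > 0" "filterlim (\<lambda>x. \<phi> x / x) at_top at_top"
  shows "distortion (g_phi \<phi> \<delta>)"
  unfolding distortion_def
  using g_phi_mono[OF assms(1-3)] g_phi_strict[OF assms(1-3)] g_phi_surj[OF assms(1-4)] by blast

lemma phi_ball_measure_le_g_phi:
  assumes "prob_space M" "convex_on {0..} \<phi>" "\<phi> 1 = 0" "\<delta> > 0"
    and "Q \<in> phi_ball M \<phi> \<delta>" "A \<in> sets M"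
  shows "measure Q A \<le> g_phi \<phi> \<delta> (measure M A)"
proof -
  interpret prob_space M by fact
  have Q: "Q \<in> abs_cont_probs M" using assms(5) by (simp add: phi_ball_def)
  interpret Q: prob_space Q using Q by (simp add: abs_cont_probs_def)
  note sublevel = div_sublevel_facts[OF assms(2-4)]
  consider "measure M A = 0" | "measure M A = 1" | "0 < measure M A" "measure M A < 1"
    using measure_nonneg[of M A] prob_le_1[of A] by linarith
  then show ?thesis
  proof cases
    case 1
    then have "A \<in> null_sets M" using assms(6) by (simp add: null_sets_def emeasure_eq_measure)
    then have "A \<in> null_sets Q" using Q by (auto simp: abs_cont_probs_def absolutely_continuous_def)
    with 1 show ?thesis by (simp add: g_phi_def measure_eq_0_null_sets)
  next
    case 2
    then show ?thesis using Q.prob_le_1[of A] by (simp add: g_phi_def)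
  next
    case 3
    show ?thesis
    proof (cases "measure Q A \<le> measure M A")
      case True
      then show ?thesis using sublevel(5)[OF 3] by simp
    next
      case False
      then have "measure Q A \<in> div_sublevel \<phi> \<delta> (measure M A)"
        using phi_ball_bernoulli_div_le[OF assms(1,2,5,6) 3] Q.prob_le_1[of A]
        by (simp add: div_sublevel_def)
      then show ?thesis by (rule sublevel(4)[OF 3])
    qed
  qed
qed

lemma phi_ball_upper_prob:
  assumes "prob_space M" "convex_on {0..} \<phi>" "\<phi> 1 = 0" "\<delta> > 0"
  shows "upper_prob_distortion M (phi_ball M \<phi> \<delta>) (g_phi \<phi> \<delta>)"
proof (rule upper_prob_distortion_interior[OF assms(1)])
  show "M \<in> phi_ball M \<phi> \<delta>" using self_in_phi_ball[OF assms(1-3)] assms(4) by simp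
  show "\<And>Q. Q \<in> phi_ball M \<phi> \<delta> \<Longrightarrow> prob_space Q \<and> sets Q = sets M"
    by (simp add: phi_ball_def abs_cont_probs_def)
  show "g_phi \<phi> \<delta> 0 = 0" "g_phi \<phi> \<delta> 1 = 1" by (simp_all add: g_phi_def)
  show "\<And>Q A. Q \<in> phi_ball M \<phi> \<delta> \<Longrightarrow> A \<in> sets M \<Longrightarrow> measure Q A \<le> g_phi \<phi> \<delta> (measure M A)"
    by (rule phi_ball_measure_le_g_phi[OF assms])
  fix A c assume A: "A \<in> sets M" "0 < measure M A" "measure M A < 1" "c < g_phi \<phi> \<delta> (measure M A)"
  note sublevel = div_sublevel_facts[OF assms(2-4) A(2,3)]
  obtain t where t: "t \<in> div_sublevel \<phi> \<delta> (measure M A)" "c < t"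
    using less_cSup_iff[OF sublevel(3,2)] g_phi_eq_Sup[OF A(2,3)] A(4) by auto
  then have "0 \<le> t" "t \<le> 1" "bernoulli_div \<phi> (measure M A) t \<le> \<delta>"
    using A(2) by (auto simp: div_sublevel_def)
  with t(2) show "\<exists>Q\<in>phi_ball M \<phi> \<delta>. c < measure Q A"
    using two_point_density_in_phi_ball[OF assms(1,2) A(1-3)] two_point_density(2)[OF assms(1) A(1-3)]
    by force
qed

theorem infconv_SUP_LVaR_eq_LVaR_Lstar:
  fixes G L :: "nat \<Rightarrow> real \<Rightarrow> real" and Qs :: "nat \<Rightarrow> 'a measure set"
  assumes "prob_space M" "atomless M" "admissible_rvs M XX" "X \<in> XX" "n \<ge> 1"
    and "\<forall>i\<in>{1..n}. L i \<in> H_I" "\<forall>i\<in>{1..n}. distortion (G i)"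
    and "\<forall>i\<in>{1..n}. upper_prob_distortion M (Qs i) (G i)"
    and "attainable n (\<lambda>i y. inv01 (G i) (L i y))"
  shows "infconv n (\<lambda>i Y. SUP Q\<in>Qs i. LVaR (L i) Q Y) M XX X
       = LVaR (Lstar n (\<lambda>i y. inv01 (G i) (L i y))) M X"
proof (rule infconv_eq_LVaR_Lstar[OF assms(1-5) _ assms(9)])
  show "\<forall>i\<in>{1..n}. (\<lambda>y. inv01 (G i) (L i y)) \<in> H_I"
    using assms(6,7) inv01_comp_H_I by blast
  show "\<forall>i\<in>{1..n}. \<forall>Y\<in>XX. (SUP Q\<in>Qs i. LVaR (L i) Q Y) = LVaR (\<lambda>y. inv01 (G i) (L i y)) M Y"
  proof (intro ballI)
    fix i Y assume i: "i \<in> {1..n}" and Y: "Y \<in> XX"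
    have L: "mono (L i)" "\<And>x. 0 < L i x \<and> L i x < 1" using assms(6) i by (auto simp: H_I_def)
    show "(SUP Q\<in>Qs i. LVaR (L i) Q Y) = LVaR (\<lambda>y. inv01 (G i) (L i y)) M Y"
    proof (rule SUP_LVaR_eq_LVaR[OF assms(1) _ _ L(1)])
      show "Y \<in> borel_measurable M" using assms(3) Y by (auto simp: admissible_rvs_def)
      show "upper_prob_distortion M (Qs i) (G i)" using assms(8) i by blast
      show "mono (\<lambda>y. inv01 (G i) (L i y))"
        using inv01_comp_H_I[of "G i" "L i"] assms(6,7) i by (simp add: H_I_def)
      show "G i p \<le> L i x \<longleftrightarrow> p \<le> inv01 (G i) (L i x)" if "0 \<le> p" "p \<le> 1" for x p
        using inv01_galois(4)[of "G i" "L i x" p] assms(7) i L(2)[of x] that by simp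
    qed
  qed
qed

theorem mainTheorem15:
  fixes M :: "'a measure" and XX :: "('a \<Rightarrow> real) set" and n :: nat
    and L :: "nat \<Rightarrow> real \<Rightarrow> real"
    and \<phi> :: "nat \<Rightarrow> real \<Rightarrow> real" and \<delta> :: "nat \<Rightarrow> real"
    and k1 k2 :: "nat \<Rightarrow> real"
  assumes "prob_space M" and "atomless M"
    and "admissible_rvs M XX"
    and "n \<ge> 1"
    and "\<forall>i\<in>{1..n}. L i \<in> H_I"
  shows "((\<forall>i\<in>{1..n}. strictly_convex_nonneg (\<phi> i) \<and> \<phi> i 1 = 0 \<and>
             filterlim (\<lambda>x. \<phi> i x / x) at_top at_top \<and> \<delta> i > 0)
          \<and> attainable n (\<lambda>i y. inv01 (g_phi (\<phi> i) (\<delta> i)) (L i y))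
          \<longrightarrow> (\<forall>X\<in>XX. infconv n (\<lambda>i Y. SUP Q\<in>phi_ball M (\<phi> i) (\<delta> i). LVaR (L i) Q Y) M XX X
                 = LVaR (Lstar n (\<lambda>i y. inv01 (g_phi (\<phi> i) (\<delta> i)) (L i y))) M X))
       \<and> ((\<forall>i\<in>{1..n}. 0 \<le> k1 i \<and> k1 i < 1 \<and> 1 < k2 i)
          \<and> attainable n (\<lambda>i y. inv01 (g_band (k1 i) (k2 i)) (L i y))
          \<longrightarrow> (\<forall>X\<in>XX. infconv n (\<lambda>i Y. SUP Q\<in>ratio_band M (k1 i) (k2 i). LVaR (L i) Q Y) M XX X
                 = LVaR (Lstar n (\<lambda>i y. inv01 (g_band (k1 i) (k2 i)) (L i y))) M X))"
proof (intro conjI impI ballI; elim conjE)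
  fix X assume X: "X \<in> XX"
    and \<phi>: "\<forall>i\<in>{1..n}. strictly_convex_nonneg (\<phi> i) \<and> \<phi> i 1 = 0 \<and>
             filterlim (\<lambda>x. \<phi> i x / x) at_top at_top \<and> \<delta> i > 0"
    and att: "attainable n (\<lambda>i y. inv01 (g_phi (\<phi> i) (\<delta> i)) (L i y))"
  have "convex_on {0..} (\<phi> i)" if "i \<in> {1..n}" for i
    using \<phi> that strictly_convex_nonneg_imp_convex_on by blast
  with \<phi> show "infconv n (\<lambda>i Y. SUP Q\<in>phi_ball M (\<phi> i) (\<delta> i). LVaR (L i) Q Y) M XX X
      = LVaR (Lstar n (\<lambda>i y. inv01 (g_phi (\<phi> i) (\<delta> i)) (L i y))) M X"
    by (intro infconv_SUP_LVaR_eq_LVaR_Lstar[OF assms(1-3) X assms(4,5) _ _ att] ballI)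
      (simp_all add: g_phi_distortion phi_ball_upper_prob assms(1))
next
  fix X assume X: "X \<in> XX"
    and k: "\<forall>i\<in>{1..n}. 0 \<le> k1 i \<and> k1 i < 1 \<and> 1 < k2 i"
    and att: "attainable n (\<lambda>i y. inv01 (g_band (k1 i) (k2 i)) (L i y))"
  from k show "infconv n (\<lambda>i Y. SUP Q\<in>ratio_band M (k1 i) (k2 i). LVaR (L i) Q Y) M XX X
      = LVaR (Lstar n (\<lambda>i y. inv01 (g_band (k1 i) (k2 i)) (L i y))) M X"
    by (intro infconv_SUP_LVaR_eq_LVaR_Lstar[OF assms(1-3) X assms(4,5) _ _ att] ballI)
      (simp_all add: g_band_distortion ratio_band_upper_prob assms(1))
qed

end
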